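(* Let $r_1,r_2,r_3,L,M>0$ with $r_2>\max(r_1,r_3)$, and let $\lambda_1$, $\varphi_1$, $F$ be as in the context. Let $c_A>2\sqrt{-\lambda_1}$, let $0<T\le+\infty$, and let $A\in\mathcal C(\mathbb{R},[0,+\infty))$ with $A(t)=c_At$ for $t\in[0,T)$. Let $r(t,x)=r_1$ if $x<A(t)$, $r_2$ if $A(t)\le x<A(t)+L$, $r_3$ if $x\ge A(t)+L$, and let $f$ be globally bounded in $(t,x)$, $\mathcal C^2$ in $u$, with $f(t,x,0)=0$, $\partial_uf(t,x,0)=r(t,x)$, $r(t,x)u\ge f(t,x,u)\ge r(t,x)u-Mu^2$ for $u\ge0$, and $f(t,x,u)<0$ for $u>1$. Let $c=F(c_A)$ if $c_A<2\sqrt{r_1}+2\sqrt{-\lambda_1-r_1}$ and $c=2\sqrt{r_1}$ if $c_A\ge2\sqrt{r_1}+2\sqrt{-\lambda_1-r_1}$, let $\lambda(c)=\frac12(c-\sqrt{c^2-4r_1})$, and define $$\overline{u}(t,x)=\begin{cases}2 & x\le ct-\frac{\ln2}{\lambda(c)},\\ e^{-\lambda(c)(x-ct)} & ct-\frac{\ln 2}{\lambda(c)}<x<c_At,\\ e^{-\lambda(c)(c_A-c)t}e^{-\frac{c_A(x-c_At)}{2}}\varphi_1\big(\frac{x-c_At}{L}\big) & x\ge c_At.\end{cases}$$ Then for every constant $C\ge1$, $C\overline{u}$ is a (generalized) super-solution of $\partial_tu=\partial_{xx}u+f(t,x,u)$ for $t\in[0,T)$, $x\in\mathbb{R}$.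
   Context: Let $\underline{L}=0$ if $r_1=r_3$ and $\underline{L}=\frac{1}{\sqrt{r_2-\max(r_1,r_3)}}\operatorname{arccot}\big(\sqrt{\frac{r_2-\max(r_1,r_3)}{|r_1-r_3|}}\big)$ otherwise ($\operatorname{arccot}$ the inverse of $\cot|_{(0,\pi)}$). $\lambda_1=-\max(r_1,r_3)$ if $L\le\underline{L}$; if $L>\underline{L}$, $\lambda_1$ is the unique solution in $(-r_2,\min(-\max(r_1,r_3),\pi^2/L^2-r_2))$ of $\cot(L\sqrt{r_2+\lambda_1})=\frac{r_2+\lambda_1-\sqrt{(r_1+\lambda_1)(r_3+\lambda_1)}}{\sqrt{r_2+\lambda_1}(\sqrt{-r_1-\lambda_1}+\sqrt{-r_3-\lambda_1})}$. $F(c)=\frac{c-2\sqrt{-\lambda_1-r_1}}{2}+\frac{2r_1}{c-2\sqrt{-\lambda_1-r_1}}$ for $c>2\sqrt{-\lambda_1-r_1}$. The function $\varphi_1$ (a positive $\mathcal C^1$ solution of $-L^{-2}\varphi''-m\varphi=\lambda_1\varphi$ with $m=r_1\mathbf 1_{y<0}+r_2\mathbf 1_{0\le y<1}+r_3\mathbf 1_{y\ge1}$, normalized by $\varphi_1(0)=1$) is: (1) if $L>\underline{L}$: with $C_3\in(0,\pi/2)$ given by $\cot C_3=\sqrt{(-r_1-\lambda_1)/(r_2+\lambda_1)}$, $\varphi_1(y)=e^{L\sqrt{-r_1-\lambda_1}\,y}$ for $y\le0$, $\varphi_1(y)=\sin(L\sqrt{r_2+\lambda_1}\,y+C_3)/\sin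 C_3$ for $0<y<1$, $\varphi_1(y)=\frac{\sin(L\sqrt{r_2+\lambda_1}+C_3)}{\sin C_3}e^{-L\sqrt{-r_3-\lambda_1}(y-1)}$ for $y\ge1$; (2) if $r_1<r_3$ and $L\le\underline{L}$ (so $\lambda_1=-r_3$): with $C_3\in(0,\pi/2)$, $\cot C_3=\sqrt{(r_3-r_1)/(r_2-r_3)}$, $\varphi_1(y)=e^{L\sqrt{r_3-r_1}\,y}$ for $y\le0$, $\sin(L\sqrt{r_2-r_3}\,y+C_3)/\sin C_3$ for $0<y<1$, and $\frac{\sin(L\sqrt{r_2-r_3}+C_3)}{\sin C_3}+\frac{\sqrt{r_2-r_3}\cos(L\sqrt{r_2-r_3}+C_3)}{\sin C_3}L(y-1)$ for $y\ge1$; (3) if $r_1>r_3$ and $L\le\underline{L}$ (so $\lambda_1=-r_1$): $\varphi_1(y)=\psi(1-y)/\psi(1)$ where $\psi$ is the function of case (2) with $r_1$ and $r_3$ interchanged. A (generalized) super-solution is a continuous function, smooth on finitely many space-time regions separated by $\mathcal C^1$ curves, satisfying $\partial_t\overline u\ge\partial_{xx}\overline u+f(t,x,\overline u)$ in each region and $\partial_x\overline u(t,x^-)\ge\partial_x\overline u(t,x^+)$ across each interface. *)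

theory Defs
  imports "HOL-Analysis.Analysis" "HOL-Library.Extended_Real"
begin

text \<open>arccot is the inverse of cot restricted to (0,pi): arccot y = pi/2 - arctan y.\<close>
definition arccot :: "real \<Rightarrow> real" where
  "arccot y = pi / 2 - arctan y"

definition Lbar :: "real \<Rightarrow> real \<Rightarrow> real \<Rightarrow> real" where
  "Lbar r1 r2 r3 =
     (if r1 = r3 then 0
      else 1 / sqrt (r2 - max r1 r3) * arccot (sqrt ((r2 - max r1 r3) / \<bar>r1 - r3\<bar>)))"

definition lambda1 :: "real \<Rightarrow> real \<Rightarrow> real \<Rightarrow> real \<Rightarrow> real" where
  "lambda1 r1 r2 r3 L =
     (if L \<le> Lbar r1 r2 r3 then - max r1 r3
      else (THE l. - r2 < l \<and> l < min (- max r1 r3) (pi\<^sup>2 / L\<^sup>2 - r2) \<and>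
              cot (L * sqrt (r2 + l)) =
                (r2 + l - sqrt ((r1 + l) * (r3 + l))) /
                (sqrt (r2 + l) * (sqrt (- r1 - l) + sqrt (- r3 - l)))))"

text \<open>F(c), depending on r1 and lambda1 (passed as parameter lam).\<close>
definition Ffun :: "real \<Rightarrow> real \<Rightarrow> real \<Rightarrow> real" where
  "Ffun r1 lam c = (c - 2 * sqrt (- lam - r1)) / 2 + 2 * r1 / (c - 2 * sqrt (- lam - r1))"

text \<open>Case (2) profile (r1 < r3, L \<le> Lbar, lambda1 = -r3).\<close>
definition phi_case2 :: "real \<Rightarrow> real \<Rightarrow> real \<Rightarrow> real \<Rightarrow> real \<Rightarrow> real" where
  "phi_case2 r1 r2 r3 L y =
     (let C3 = arccot (sqrt ((r3 - r1) / (r2 - r3))); k = sqrt (r2 - r3) in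
      if y \<le> 0 then exp (L * sqrt (r3 - r1) * y)
      else if y < 1 then sin (L * k * y + C3) / sin C3
      else sin (L * k + C3) / sin C3 + k * cos (L * k + C3) / sin C3 * L * (y - 1))"

definition phi1 :: "real \<Rightarrow> real \<Rightarrow> real \<Rightarrow> real \<Rightarrow> real \<Rightarrow> real" where
  "phi1 r1 r2 r3 L y =
     (if L > Lbar r1 r2 r3 then
        (let l = lambda1 r1 r2 r3 L;
             C3 = arccot (sqrt ((- r1 - l) / (r2 + l))); k = sqrt (r2 + l) in
         if y \<le> 0 then exp (L * sqrt (- r1 - l) * y)
         else if y < 1 then sin (L * k * y + C3) / sin C3
         else sin (L * k + C3) / sin C3 * exp (- L * sqrt (- r3 - l) * (y - 1)))
      else if r1 < r3 then phi_case2 r1 r2 r3 L y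
      else phi_case2 r3 r2 r1 L (1 - y) / phi_case2 r3 r2 r1 L 1)"

definition time_dom :: "ereal \<Rightarrow> real set" where
  "time_dom T = {t. 0 \<le> t \<and> ereal t < T}"

definition classical_super_at ::
  "(real \<Rightarrow> real \<Rightarrow> real) \<Rightarrow> (real \<Rightarrow> real \<Rightarrow> real \<Rightarrow> real) \<Rightarrow> ereal \<Rightarrow> real \<Rightarrow> real \<Rightarrow> bool" where
  "classical_super_at u f T t x \<longleftrightarrow>
     (\<exists>e>0. \<exists>Ut Ux Uxx :: real \<Rightarrow> real \<Rightarrow> real.
        (let N = {(s, y). s \<in> time_dom T \<and> \<bar>s - t\<bar> < e \<and> \<bar>y - x\<bar> < e} in
         (\<forall>(s, y) \<in> N.
            ((\<lambda>s'. u s' y) has_real_derivative Ut s y) (at s within time_dom T) \<and>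
            ((\<lambda>y'. u s y') has_real_derivative Ux s y) (at y) \<and>
            ((\<lambda>y'. Ux s y') has_real_derivative Uxx s y) (at y)) \<and>
         continuous_on N (\<lambda>(s, y). Ut s y) \<and>
         continuous_on N (\<lambda>(s, y). Ux s y) \<and>
         continuous_on N (\<lambda>(s, y). Uxx s y)) \<and>
        Ut t x \<ge> Uxx t x + f t x (u t x))"

definition gen_supersolution ::
  "(real \<Rightarrow> real \<Rightarrow> real) \<Rightarrow> (real \<Rightarrow> real \<Rightarrow> real \<Rightarrow> real) \<Rightarrow> ereal \<Rightarrow> bool" where
  "gen_supersolution u f T \<longleftrightarrow>
     continuous_on (time_dom T \<times> UNIV) (\<lambda>(t, x). u t x) \<and>
     (\<exists>gs :: (real \<Rightarrow> real) list.
        (\<forall>g \<in> set gs. \<exists>g'. (\<forall>t \<in> time_dom T. (g has_real_derivative g' t) (at t within time_dom T))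
                          \<and> continuous_on (time_dom T) g') \<and>
        (\<forall>t \<in> time_dom T. \<forall>i. Suc i < length gs \<longrightarrow> (gs ! i) t < (gs ! Suc i) t) \<and>
        (\<forall>t \<in> time_dom T. \<forall>x. (\<forall>g \<in> set gs. x \<noteq> g t) \<longrightarrow> classical_super_at u f T t x) \<and>
        (\<forall>t \<in> time_dom T. \<forall>g \<in> set gs. \<exists>dl dr.
            ((\<lambda>h. (u t (g t + h) - u t (g t)) / h) \<longlongrightarrow> dl) (at_left 0) \<and>
            ((\<lambda>h. (u t (g t + h) - u t (g t)) / h) \<longlongrightarrow> dr) (at_right 0) \<and>
            dl \<ge> dr))"

definition lam_c :: "real \<Rightarrow> real \<Rightarrow> real" where
  "lam_c r1 c = (c - sqrt (c\<^sup>2 - 4 * r1)) / 2"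

definition speed_c :: "real \<Rightarrow> real \<Rightarrow> real \<Rightarrow> real \<Rightarrow> real \<Rightarrow> real" where
  "speed_c r1 r2 r3 L cA =
     (let l = lambda1 r1 r2 r3 L in
      if cA < 2 * sqrt r1 + 2 * sqrt (- l - r1) then Ffun r1 l cA else 2 * sqrt r1)"

definition ubar :: "real \<Rightarrow> real \<Rightarrow> real \<Rightarrow> real \<Rightarrow> real \<Rightarrow> real \<Rightarrow> real \<Rightarrow> real" where
  "ubar r1 r2 r3 L cA t x =
     (let c = speed_c r1 r2 r3 L cA; lc = lam_c r1 c in
      if x \<le> c * t - ln 2 / lc then 2
      else if x < cA * t then exp (- lc * (x - c * t))
      else exp (- lc * (cA - c) * t) * exp (- cA * (x - cA * t) / 2)
             * phi1 r1 r2 r3 L ((x - cA * t) / L))"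

end

theory Submission
  imports Defs
begin

text \<open>Off the three curves \<open>x = c t - ln 2 / \<lambda>\<close>, \<open>x = cA t\<close> and \<open>x = cA t + L\<close>, each piece of
  \<open>C ubar\<close> is a classical super-solution. The constant \<open>2 C\<close> sits where \<open>f < 0\<close>. The front
  \<open>C exp (- \<lambda> (x - c t))\<close> satisfies \<open>u\<^sub>t - u\<^sub>x\<^sub>x = (c \<lambda> - \<lambda>\<^sup>2) u = r1 u \<ge> f u\<close>. On the patch,
  in the frame moving with speed \<open>cA\<close>, the weight \<open>exp (- cA \<xi> / 2)\<close> removes the drift and the
  eigenvalue equation of \<open>\<phi>\<^sub>1\<close> gives \<open>u\<^sub>t - u\<^sub>x\<^sub>x - r u = (cA\<^sup>2 / 4 + \<lambda>\<^sub>1 - \<lambda> (cA - c)) u\<close>, which is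
  nonnegative by the choice of \<open>c\<close>. Across the curves the \<open>x\<close>-derivative can only drop: from
  \<open>0\<close> to \<open>- 2 \<lambda> C\<close> at the first; at the second because \<open>\<phi>\<^sub>1'(0) \<le> L sqrt (- \<lambda>\<^sub>1 - r1)\<close> while
  \<open>\<lambda> \<le> cA / 2 - sqrt (- \<lambda>\<^sub>1 - r1)\<close>; not at all at the third, where \<open>\<phi>\<^sub>1\<close> is \<open>C\<^sup>1\<close>.\<close>

section \<open>Generalized super-solutions from smooth pieces\<close>

lemma classical_super_atI:
  fixes u U Ut Ux Uxx :: "real \<Rightarrow> real \<Rightarrow> real"
  assumes W: "open W" "(t, x) \<in> W" and u_eq: "\<And>s y. (s, y) \<in> W \<Longrightarrow> u s y = U s y"
    and Ut: "\<And>s y. ((\<lambda>s. U s y) has_real_derivative Ut s y) (at s)"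
    and Ux: "\<And>s y. ((\<lambda>y. U s y) has_real_derivative Ux s y) (at y)"
    and Uxx: "\<And>s y. ((\<lambda>y. Ux s y) has_real_derivative Uxx s y) (at y)"
    and cont: "continuous_on UNIV (\<lambda>(s, y). Ut s y)" "continuous_on UNIV (\<lambda>(s, y). Ux s y)"
      "continuous_on UNIV (\<lambda>(s, y). Uxx s y)"
    and ineq: "Uxx t x + f t x (U t x) \<le> Ut t x"
  shows "classical_super_at u f T t x"
proof -
  obtain e0 where "e0 > 0" "ball (t, x) e0 \<subseteq> W"
    using W open_contains_ball by blast
  then obtain e where e: "e > 0" "ball (t, x) (2 * e) \<subseteq> W"
    by (intro that[of "e0 / 2"]) auto
  have in_W: "(s, y) \<in> W" if "\<bar>s - t\<bar> < e" "\<bar>y - x\<bar> < e" for s y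
  proof -
    have "dist (t, x) (s, y) = sqrt ((t - s)\<^sup>2 + (x - y)\<^sup>2)"
      by (simp add: dist_Pair_Pair dist_real_def)
    also have "\<dots> \<le> \<bar>t - s\<bar> + \<bar>x - y\<bar>" by (rule sqrt_sum_squares_le_sum_abs)
    also have "\<dots> < 2 * e" using that by (simp add: abs_minus_commute)
    finally show ?thesis using e(2) by auto
  qed
  have derivs: "((\<lambda>s'. u s' y) has_real_derivative Ut s y) (at s within time_dom T) \<and>
      ((\<lambda>y'. u s y') has_real_derivative Ux s y) (at y) \<and>
      ((\<lambda>y'. Ux s y') has_real_derivative Uxx s y) (at y)" if "(s, y) \<in> W" for s y
  proof (intro conjI Uxx)
    have "open ((\<lambda>s'. (s', y)) -` W)"
      by (rule open_vimage[OF W(1)]) (intro continuous_intros)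
    then have "((\<lambda>s'. u s' y) has_real_derivative Ut s y) (at s)"
      by (rule has_field_derivative_transform_within_open[OF Ut]) (use that u_eq in auto)
    then show "((\<lambda>s'. u s' y) has_real_derivative Ut s y) (at s within time_dom T)"
      by (rule has_field_derivative_at_within)
    have "open (Pair s -` W)"
      by (rule open_vimage[OF W(1)]) (intro continuous_intros)
    then show "((\<lambda>y'. u s y') has_real_derivative Ux s y) (at y)"
      by (rule has_field_derivative_transform_within_open[OF Ux]) (use that u_eq in auto)
  qed
  define N where "N = {(s, y). s \<in> time_dom T \<and> \<bar>s - t\<bar> < e \<and> \<bar>y - x\<bar> < e}"
  have "N \<subseteq> W" using in_W by (auto simp: N_def)
  then have "(\<forall>(s, y) \<in> N.
            ((\<lambda>s'. u s' y) has_real_derivative Ut s y) (at s within time_dom T) \<and>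
            ((\<lambda>y'. u s y') has_real_derivative Ux s y) (at y) \<and>
            ((\<lambda>y'. Ux s y') has_real_derivative Uxx s y) (at y)) \<and>
         continuous_on N (\<lambda>(s, y). Ut s y) \<and>
         continuous_on N (\<lambda>(s, y). Ux s y) \<and>
         continuous_on N (\<lambda>(s, y). Uxx s y)"
    using derivs by (auto intro: continuous_on_subset[OF cont(1)] continuous_on_subset[OF cont(2)]
        continuous_on_subset[OF cont(3)])
  then show ?thesis
    unfolding classical_super_at_def Let_def N_def using e(1) ineq u_eq[OF W(2)] by auto
qed

lemma moving_frame_classical_super_at:
  fixes E E' E'' :: "real \<Rightarrow> real"
  assumes W: "open W" "(t, x) \<in> W"
    and u_eq: "\<And>s y. (s, y) \<in> W \<Longrightarrow> u s y = exp (- a * s) * E (y - v * s)"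
    and E: "\<And>z. (E has_real_derivative E' z) (at z)"
    and E': "\<And>z. (E' has_real_derivative E'' z) (at z)"
    and E''_cont: "continuous_on UNIV E''"
    and ineq: "f t x (exp (- a * t) * E (x - v * t))
      \<le> exp (- a * t) * (- a * E (x - v * t) - v * E' (x - v * t) - E'' (x - v * t))"
  shows "classical_super_at u f T t x"
proof (rule classical_super_atI[OF W u_eq])
  have E_cont: "continuous_on UNIV E" and E'_cont: "continuous_on UNIV E'"
    using E E' by (metis DERIV_isCont continuous_at_imp_continuous_on)+
  have cont_frame: "continuous_on UNIV (\<lambda>(s, y). exp (- a * s) * F (y - v * s))"
    if "continuous_on UNIV F" for F :: "real \<Rightarrow> real"
    unfolding split_def
    by (intro continuous_intros continuous_on_compose2[OF that]) auto
  show "((\<lambda>s. exp (- a * s) * E (y - v * s)) has_real_derivative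
      exp (- a * s) * (- a * E (y - v * s) - v * E' (y - v * s))) (at s)" for s y
    by (auto intro!: derivative_eq_intros DERIV_chain2[OF E] simp: algebra_simps)
  show "((\<lambda>y. exp (- a * s) * E (y - v * s)) has_real_derivative exp (- a * s) * E' (y - v * s)) (at y)"
    for s y
    by (auto intro!: derivative_eq_intros DERIV_chain2[OF E])
  show "((\<lambda>y. exp (- a * s) * E' (y - v * s)) has_real_derivative exp (- a * s) * E'' (y - v * s)) (at y)"
    for s y
    by (auto intro!: derivative_eq_intros DERIV_chain2[OF E'])
  show "continuous_on UNIV (\<lambda>(s, y). exp (- a * s) * (- a * E (y - v * s) - v * E' (y - v * s)))"
    by (rule cont_frame) (intro continuous_intros E_cont E'_cont)
  show "continuous_on UNIV (\<lambda>(s, y). exp (- a * s) * E' (y - v * s))"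
    by (rule cont_frame[OF E'_cont])
  show "continuous_on UNIV (\<lambda>(s, y). exp (- a * s) * E'' (y - v * s))"
    by (rule cont_frame[OF E''_cont])
  show "exp (- a * t) * E'' (x - v * t) + f t x (exp (- a * t) * E (x - v * t))
      \<le> exp (- a * t) * (- a * E (x - v * t) - v * E' (x - v * t))"
    using ineq by (simp add: algebra_simps)
qed

definition damped :: "real \<Rightarrow> real \<Rightarrow> (real \<Rightarrow> real) \<Rightarrow> real \<Rightarrow> real" where
  "damped v L \<psi> \<xi> = exp (- v * \<xi> / 2) * \<psi> (\<xi> / L)"

lemma damped_has_real_derivative:
  assumes "\<And>y. (\<psi> has_real_derivative \<psi>' y) (at y)" "L \<noteq> 0"
  shows "(damped v L \<psi> has_real_derivative damped v L (\<lambda>y. \<psi>' y / L - v / 2 * \<psi> y) \<xi>) (at \<xi>)"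
  unfolding damped_def
  using assms(2) by (auto intro!: derivative_eq_intros DERIV_chain2[OF assms(1)] simp: field_simps)

lemma damped_frame_has_real_derivative:
  assumes "\<And>y. (\<psi> has_real_derivative \<psi>' y) (at y)" "L \<noteq> 0"
  shows "((\<lambda>y. exp (- a * t) * damped v L \<psi> (y - v * t)) has_real_derivative
    exp (- a * t) * damped v L (\<lambda>y. \<psi>' y / L - v / 2 * \<psi> y) (y - v * t)) (at y)"
  by (auto intro!: derivative_eq_intros DERIV_chain2[OF damped_has_real_derivative[OF assms]])

lemma continuous_on_damped:
  assumes "continuous_on UNIV \<psi>"
  shows "continuous_on UNIV (damped v L \<psi>)"
proof -
  have "continuous_on UNIV (\<lambda>\<xi>. \<psi> (\<xi> / L))"
    by (rule continuous_on_compose2[OF assms]) (simp_all add: divide_inverse continuous_on_mult_right)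
  then show ?thesis
    unfolding damped_def by (intro continuous_intros) auto
qed

text \<open>The weight \<open>exp (- v \<xi> / 2)\<close> cancels the first-order term of the moving frame, leaving
  \<open>u\<^sub>s - u\<^sub>y\<^sub>y = (v\<^sup>2 / 4 + \<rho> + l - a) u\<close>.\<close>
lemma damped_frame_classical_super_at:
  fixes \<psi> \<psi>' :: "real \<Rightarrow> real"
  assumes W: "open W" "(t, x) \<in> W"
    and u_eq: "\<And>s y. (s, y) \<in> W \<Longrightarrow> u s y = exp (- a * s) * damped v L \<psi> (y - v * s)"
    and \<psi>: "\<And>y. (\<psi> has_real_derivative \<psi>' y) (at y)"
    and \<psi>': "\<And>y. (\<psi>' has_real_derivative - (L\<^sup>2 * (\<rho> + l)) * \<psi> y) (at y)"
    and L: "L \<noteq> 0" and nonneg: "0 \<le> \<psi> ((x - v * t) / L)" and a: "a \<le> v\<^sup>2 / 4 + l"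
    and f_le: "\<And>w. 0 \<le> w \<Longrightarrow> f t x w \<le> \<rho> * w"
  shows "classical_super_at u f T t x"
proof -
  define \<psi>1 where "\<psi>1 y = \<psi>' y / L - v / 2 * \<psi> y" for y
  define \<psi>1' where "\<psi>1' y = - (L\<^sup>2 * (\<rho> + l)) * \<psi> y / L - v / 2 * \<psi>' y" for y
  have \<psi>1: "(\<psi>1 has_real_derivative \<psi>1' y) (at y)" for y
    unfolding \<psi>1_def \<psi>1'_def by (intro DERIV_diff DERIV_cdivide DERIV_cmult \<psi> \<psi>')
  have cont: "continuous_on UNIV \<psi>" "continuous_on UNIV \<psi>'"
    using \<psi> \<psi>' by (metis DERIV_isCont continuous_at_imp_continuous_on)+
  define E' where "E' = damped v L \<psi>1"
  define E'' where "E'' = damped v L (\<lambda>y. \<psi>1' y / L - v / 2 * \<psi>1 y)"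
  have E: "(damped v L \<psi> has_real_derivative E' z) (at z)" for z
    unfolding E'_def \<psi>1_def using damped_has_real_derivative[OF \<psi> L] .
  have E': "(E' has_real_derivative E'' z) (at z)" for z
    unfolding E'_def E''_def using damped_has_real_derivative[OF \<psi>1 L] .
  have E''_cont: "continuous_on UNIV E''"
    unfolding E''_def \<psi>1_def \<psi>1'_def using L by (intro continuous_on_damped continuous_intros cont) auto
  define w where "w = exp (- a * t) * damped v L \<psi> (x - v * t)"
  have w_nonneg: "0 \<le> w"
    using nonneg by (simp add: w_def damped_def)
  have "exp (- a * t) * (- a * damped v L \<psi> (x - v * t) - v * E' (x - v * t) - E'' (x - v * t))
      = (v\<^sup>2 / 4 + \<rho> + l - a) * w"
    using L by (simp add: w_def E'_def E''_def damped_def \<psi>1_def \<psi>1'_def field_simps power2_eq_square)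
  moreover have "f t x w \<le> \<rho> * w"
    using f_le[OF w_nonneg] .
  moreover have "\<rho> * w \<le> (v\<^sup>2 / 4 + \<rho> + l - a) * w"
    using a w_nonneg by (intro mult_right_mono) auto
  ultimately have "f t x w
      \<le> exp (- a * t) * (- a * damped v L \<psi> (x - v * t) - v * E' (x - v * t) - E'' (x - v * t))"
    by linarith
  with W u_eq E E' E''_cont show ?thesis
    unfolding w_def by (rule moving_frame_classical_super_at)
qed

lemma diff_quotient_tendsto:
  fixes F u :: "real \<Rightarrow> real"
  assumes "(F has_real_derivative D) (at x0)" "G \<le> at 0"
    and "eventually (\<lambda>h. u (x0 + h) = F (x0 + h)) G" "u x0 = F x0"
  shows "((\<lambda>h. (u (x0 + h) - u x0) / h) \<longlongrightarrow> D) G"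
proof -
  have "((\<lambda>h. (F (x0 + h) - F x0) / h) \<longlongrightarrow> D) G"
    using assms(1) unfolding DERIV_def by (rule tendsto_mono[OF assms(2)])
  moreover have "eventually (\<lambda>h. (F (x0 + h) - F x0) / h = (u (x0 + h) - u x0) / h) G"
    using assms(3) by eventually_elim (simp add: assms(4))
  ultimately show ?thesis by (rule Lim_transform_eventually)
qed

definition concave_kink :: "(real \<Rightarrow> real) \<Rightarrow> real \<Rightarrow> bool" where
  "concave_kink u x0 \<longleftrightarrow> (\<exists>dl dr. ((\<lambda>h. (u (x0 + h) - u x0) / h) \<longlongrightarrow> dl) (at_left 0) \<and>
    ((\<lambda>h. (u (x0 + h) - u x0) / h) \<longlongrightarrow> dr) (at_right 0) \<and> dr \<le> dl)"

lemma concave_kinkI: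
  fixes u Fl Fr :: "real \<Rightarrow> real"
  assumes Fl: "(Fl has_real_derivative dl) (at x0)" and Fr: "(Fr has_real_derivative dr) (at x0)"
    and "dr \<le> dl" "0 < \<delta>"
    and u_left: "\<And>y. x0 - \<delta> < y \<Longrightarrow> y \<le> x0 \<Longrightarrow> u y = Fl y"
    and u_right: "\<And>y. x0 \<le> y \<Longrightarrow> y < x0 + \<delta> \<Longrightarrow> u y = Fr y"
  shows "concave_kink u x0"
  unfolding concave_kink_def
proof (intro exI conjI)
  have "eventually (\<lambda>h. h \<in> {-\<delta><..<0}) (at_left (0::real))"
    using eventually_at_left_real[of "-\<delta>" 0] \<open>0 < \<delta>\<close> by simp
  then have "eventually (\<lambda>h. u (x0 + h) = Fl (x0 + h)) (at_left 0)"
    by eventually_elim (auto intro: u_left)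
  then show "((\<lambda>h. (u (x0 + h) - u x0) / h) \<longlongrightarrow> dl) (at_left 0)"
    using \<open>0 < \<delta>\<close> by (intro diff_quotient_tendsto[OF Fl]) (auto simp: at_le u_left)
  have "eventually (\<lambda>h. h \<in> {0<..<\<delta>}) (at_right (0::real))"
    using eventually_at_right_real[of 0 \<delta>] \<open>0 < \<delta>\<close> by simp
  then have "eventually (\<lambda>h. u (x0 + h) = Fr (x0 + h)) (at_right 0)"
    by eventually_elim (auto intro: u_right)
  then show "((\<lambda>h. (u (x0 + h) - u x0) / h) \<longlongrightarrow> dr) (at_right 0)"
    using \<open>0 < \<delta>\<close> by (intro diff_quotient_tendsto[OF Fr]) (auto simp: at_le u_right)
qed (fact \<open>dr \<le> dl\<close>)

section \<open>The super-solution\<close>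

text \<open>The restriction of \<open>\<phi>\<^sub>1\<close> to \<open>y \<ge> 0\<close>: \<open>pa\<close> on \<open>[0, 1]\<close> and \<open>pb\<close> on \<open>[1, \<infinity>)\<close> solve
  \<open>- L\<^sup>-\<^sup>2 \<phi>'' - r \<phi> = l \<phi>\<close>. The slope bound \<open>pa'_0\<close> is the \<open>C\<^sup>1\<close>-matching at \<open>0\<close> with the part on
  \<open>y \<le> 0\<close>, which is \<open>exp (L sqrt (- l - r1) y)\<close> in cases (1) and (2) and nonincreasing in
  case (3).\<close>
locale eigenprofile =
  fixes r1 r2 r3 L l :: real and pa pa' pb pb' :: "real \<Rightarrow> real"
  assumes L_pos: "0 < L" and l_le: "l \<le> - r1"
    and pa_deriv: "\<And>y. (pa has_real_derivative pa' y) (at y)"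
    and pa'_deriv: "\<And>y. (pa' has_real_derivative - (L\<^sup>2 * (r2 + l)) * pa y) (at y)"
    and pb_deriv: "\<And>y. (pb has_real_derivative pb' y) (at y)"
    and pb'_deriv: "\<And>y. (pb' has_real_derivative - (L\<^sup>2 * (r3 + l)) * pb y) (at y)"
    and pa_0: "pa 0 = 1" and pa_pb_1: "pa 1 = pb 1" and pa'_pb'_1: "pa' 1 = pb' 1"
    and pa_pos: "\<And>y. 0 \<le> y \<Longrightarrow> y \<le> 1 \<Longrightarrow> 0 < pa y"
    and pb_pos: "\<And>y. 1 \<le> y \<Longrightarrow> 0 < pb y"
    and pa'_0: "pa' 0 \<le> L * sqrt (- l - r1)"

locale ubar_parameters = eigenprofile +
  fixes cA c lam :: real
  assumes lam_pos: "0 < lam" and c_le_cA: "c \<le> cA"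
    and front_decay: "r1 \<le> c * lam - lam\<^sup>2"
    and frame_decay: "lam * (cA - c) \<le> cA\<^sup>2 / 4 + l"
    and lam_le: "lam \<le> cA / 2 - sqrt (- l - r1)"
begin

definition Phi :: "real \<Rightarrow> real" where
  "Phi y = (if y < 1 then pa y else pb y)"

definition front :: "real \<Rightarrow> real" where
  "front t = c * t - ln 2 / lam"

text \<open>\<open>supersol C\<close> is \<open>C ubar\<close> with \<open>\<lambda> = lam\<close> and \<open>Phi\<close> in place of \<open>\<phi>\<^sub>1\<close>; the two profiles agree at
  the arguments \<open>(x - cA t) / L \<ge> 0\<close> where they are evaluated.\<close>
definition supersol :: "real \<Rightarrow> real \<Rightarrow> real \<Rightarrow> real" where
  "supersol C t x = C * (if x \<le> front t then 2 else if x < cA * t then exp (- lam * (x - c * t))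
     else exp (- lam * (cA - c) * t) * exp (- cA * (x - cA * t) / 2) * Phi ((x - cA * t) / L))"

lemma front_less:
  assumes "0 \<le> t"
  shows "front t < cA * t"
proof -
  have "c * t \<le> cA * t" using mult_right_mono[OF c_le_cA assms] .
  moreover have "0 < ln 2 / lam" using lam_pos by simp
  ultimately show ?thesis by (simp add: front_def)
qed

lemma exp_front: "exp (- lam * (front t - c * t)) = 2"
  using lam_pos by (simp add: front_def)

lemma continuous_on_front: "continuous_on UNIV (\<lambda>p::real \<times> real. front (fst p))"
  unfolding front_def by (intro continuous_intros)

lemma supersol_left: "y \<le> front s \<Longrightarrow> supersol C s y = C * 2"
  by (simp add: supersol_def)

lemma supersol_middle: "front s < y \<Longrightarrow> y < cA * s \<Longrightarrow> supersol C s y = C * exp (- lam * (y - c * s))"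
  by (simp add: supersol_def)

lemma supersol_pa:
  assumes "front s < y" "cA * s \<le> y" "y < cA * s + L"
  shows "supersol C s y = exp (- (lam * (cA - c)) * s) * damped cA L (\<lambda>z. C * pa z) (y - cA * s)"
proof -
  have "0 \<le> (y - cA * s) / L" "(y - cA * s) / L < 1" using assms L_pos by auto
  then show ?thesis using assms by (simp add: supersol_def Phi_def damped_def)
qed

lemma supersol_pb:
  assumes "front s < y" "cA * s + L \<le> y"
  shows "supersol C s y = exp (- (lam * (cA - c)) * s) * damped cA L (\<lambda>z. C * pb z) (y - cA * s)"
proof -
  have "\<not> (y - cA * s) / L < 1" "\<not> y < cA * s" using assms L_pos by auto
  then show ?thesis using assms by (simp add: supersol_def Phi_def damped_def)
qed

lemma continuous_on_Phi: "continuous_on UNIV Phi"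
proof -
  have "continuous_on UNIV pa" "continuous_on UNIV pb"
    using pa_deriv pb_deriv by (metis DERIV_isCont continuous_at_imp_continuous_on)+
  then have "continuous_on ({..1} \<union> {1..}) Phi"
    unfolding Phi_def by (intro continuous_on_cases) (auto intro: continuous_on_subset simp: pa_pb_1)
  moreover have "{..1::real} \<union> {1..} = UNIV" by auto
  ultimately show ?thesis by simp
qed

lemma continuous_on_supersol: "continuous_on ({0..} \<times> UNIV) (\<lambda>(t, x). supersol C t x)"
proof -
  define V where "V p = (if snd p < cA * fst p then exp (- lam * (snd p - c * fst p))
    else exp (- lam * (cA - c) * fst p) * exp (- cA * (snd p - cA * fst p) / 2)
      * Phi ((snd p - cA * fst p) / L))" for p :: "real \<times> real"
  have Phi_frame: "continuous_on UNIV (\<lambda>p::real \<times> real. Phi ((snd p - cA * fst p) / L))"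
    by (rule continuous_on_compose2[OF continuous_on_Phi]) (intro continuous_intros, use L_pos in auto)
  have "continuous_on ({p. snd p \<le> cA * fst p} \<union> {p. cA * fst p \<le> snd p}) V"
    unfolding V_def
  proof (rule continuous_on_cases)
    show "closed {p :: real \<times> real. snd p \<le> cA * fst p}" "closed {p :: real \<times> real. cA * fst p \<le> snd p}"
      by (intro closed_Collect_le continuous_intros)+
    show "continuous_on {p. cA * fst p \<le> snd p} (\<lambda>p. exp (- lam * (cA - c) * fst p)
        * exp (- cA * (snd p - cA * fst p) / 2) * Phi ((snd p - cA * fst p) / L))"
      by (intro continuous_intros continuous_on_subset[OF Phi_frame]) auto
    show "continuous_on {p. snd p \<le> cA * fst p} (\<lambda>p. exp (- lam * (snd p - c * fst p)))"
      by (intro continuous_intros)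
  qed (auto simp: Phi_def pa_0 algebra_simps)
  moreover have "{p :: real \<times> real. snd p \<le> cA * fst p} \<union> {p. cA * fst p \<le> snd p} = UNIV" by auto
  ultimately have V_cont: "continuous_on UNIV V" by simp
  have "continuous_on ({p. 0 \<le> fst p \<and> snd p \<le> front (fst p)} \<union> {p. 0 \<le> fst p \<and> front (fst p) \<le> snd p})
      (\<lambda>p. if snd p \<le> front (fst p) then 2 else V p)"
  proof (rule continuous_on_cases)
    show "closed {p. 0 \<le> fst p \<and> snd p \<le> front (fst p)}" "closed {p. 0 \<le> fst p \<and> front (fst p) \<le> snd p}"
      unfolding front_def by (intro closed_Collect_conj closed_Collect_le continuous_intros)+
    show "continuous_on {p. 0 \<le> fst p \<and> front (fst p) \<le> snd p} V"
      by (rule continuous_on_subset[OF V_cont]) simp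
    show "\<forall>p. p \<in> {p. 0 \<le> fst p \<and> snd p \<le> front (fst p)} \<and> \<not> snd p \<le> front (fst p) \<or>
        p \<in> {p. 0 \<le> fst p \<and> front (fst p) \<le> snd p} \<and> snd p \<le> front (fst p) \<longrightarrow> 2 = V p"
      using front_less exp_front by (auto simp: V_def)
  qed simp
  moreover have "{p. 0 \<le> fst p \<and> snd p \<le> front (fst p)} \<union> {p. 0 \<le> fst p \<and> front (fst p) \<le> snd p}
      = {0..} \<times> (UNIV :: real set)" by auto
  ultimately have "continuous_on ({0..} \<times> UNIV) (\<lambda>p. C * (if snd p \<le> front (fst p) then 2 else V p))"
    by (simp add: continuous_on_mult_left)
  then show ?thesis
    unfolding V_def by (simp add: split_def supersol_def)
qed

lemma classical_super_at_supersol_left: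
  assumes "1 \<le> C" "x < front t" and f_neg: "\<And>w. 1 < w \<Longrightarrow> f t x w < 0"
  shows "classical_super_at (supersol C) f T t x"
proof (rule moving_frame_classical_super_at[where W = "{p. snd p < front (fst p)}" and a = 0 and v = 0
    and E = "\<lambda>_. C * 2" and E' = "\<lambda>_. 0" and E'' = "\<lambda>_. 0"])
  show "open {p. snd p < front (fst p)}"
    by (intro open_Collect_less continuous_intros continuous_on_front)
  show "f t x (exp (- 0 * t) * (C * 2)) \<le> exp (- 0 * t) * (- 0 * (C * 2) - 0 * 0 - 0)"
    using f_neg[of "C * 2"] assms(1) by simp
qed (use assms(2) in \<open>auto intro: supersol_left\<close>)

lemma classical_super_at_supersol_middle:
  assumes "0 \<le> C" "front t < x" "x < cA * t" and f_le: "\<And>w. 0 \<le> w \<Longrightarrow> f t x w \<le> r1 * w"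
  shows "classical_super_at (supersol C) f T t x"
proof (rule moving_frame_classical_super_at[where W = "{p. front (fst p) < snd p} \<inter> {p. snd p < cA * fst p}"
    and a = 0 and v = c and E = "\<lambda>z. C * exp (- lam * z)" and E' = "\<lambda>z. - lam * C * exp (- lam * z)"
    and E'' = "\<lambda>z. lam\<^sup>2 * C * exp (- lam * z)"])
  show "open ({p. front (fst p) < snd p} \<inter> {p. snd p < cA * fst p})"
    by (intro open_Int open_Collect_less continuous_intros continuous_on_front)
  define w where "w = C * exp (- lam * (x - c * t))"
  have "0 \<le> w" using assms(1) by (simp add: w_def)
  then have "f t x w \<le> r1 * w" by (rule f_le)
  also have "\<dots> \<le> (c * lam - lam\<^sup>2) * w"
    using front_decay \<open>0 \<le> w\<close> by (rule mult_right_mono)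
  finally show "f t x (exp (- 0 * t) * (C * exp (- lam * (x - c * t))))
    \<le> exp (- 0 * t) * (- 0 * (C * exp (- lam * (x - c * t))) - c * (- lam * C * exp (- lam * (x - c * t)))
      - lam\<^sup>2 * C * exp (- lam * (x - c * t)))"
    by (simp add: w_def algebra_simps)
  show "supersol C s y = exp (- 0 * s) * (C * exp (- lam * (y - c * s)))"
    if "(s, y) \<in> {p. front (fst p) < snd p} \<inter> {p. snd p < cA * fst p}" for s y
    using that by (simp add: supersol_middle)
  show "(t, x) \<in> {p. front (fst p) < snd p} \<inter> {p. snd p < cA * fst p}"
    using assms(2,3) by simp
  show "((\<lambda>z. C * exp (- lam * z)) has_real_derivative - lam * C * exp (- lam * z)) (at z)" for z
    by (auto intro!: derivative_eq_intros)
  show "((\<lambda>z. - lam * C * exp (- lam * z)) has_real_derivative lam\<^sup>2 * C * exp (- lam * z)) (at z)" for z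
    by (auto intro!: derivative_eq_intros simp: power2_eq_square)
  show "continuous_on UNIV (\<lambda>z. lam\<^sup>2 * C * exp (- lam * z))"
    by (intro continuous_intros)
qed

lemma classical_super_at_supersol_frame:
  assumes "0 \<le> C" and W: "open W" "(t, x) \<in> W"
    and u_eq: "\<And>s y. (s, y) \<in> W \<Longrightarrow>
      supersol C s y = exp (- (lam * (cA - c)) * s) * damped cA L (\<lambda>z. C * p z) (y - cA * s)"
    and p: "\<And>y. (p has_real_derivative p' y) (at y)"
    and p': "\<And>y. (p' has_real_derivative - (L\<^sup>2 * (\<rho> + l)) * p y) (at y)"
    and p_nonneg: "0 \<le> p ((x - cA * t) / L)" and f_le: "\<And>w. 0 \<le> w \<Longrightarrow> f t x w \<le> \<rho> * w"
  shows "classical_super_at (supersol C) f T t x"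
proof (rule damped_frame_classical_super_at[where \<psi> = "\<lambda>z. C * p z" and \<psi>' = "\<lambda>z. C * p' z",
    OF W u_eq])
  show "((\<lambda>z. C * p z) has_real_derivative C * p' y) (at y)" for y
    by (intro DERIV_cmult p)
  show "((\<lambda>z. C * p' z) has_real_derivative - (L\<^sup>2 * (\<rho> + l)) * (C * p y)) (at y)" for y
    using DERIV_cmult[OF p', of C] by (simp add: algebra_simps)
  show "lam * (cA - c) \<le> cA\<^sup>2 / 4 + l" by (rule frame_decay)
  show "f t x w \<le> \<rho> * w" if "0 \<le> w" for w
    using that by (rule f_le)
qed (use L_pos assms(1) p_nonneg in auto)

lemma classical_super_at_supersol:
  assumes C: "1 \<le> C" and t: "0 \<le> t"
    and x: "x \<noteq> front t" "x \<noteq> cA * t" "x \<noteq> cA * t + L"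
    and f_le: "\<And>w. 0 \<le> w \<Longrightarrow> f t x w \<le> (if x < cA * t then r1 else if x < cA * t + L then r2 else r3) * w"
    and f_neg: "\<And>w. 1 < w \<Longrightarrow> f t x w < 0"
  shows "classical_super_at (supersol C) f T t x"
proof -
  consider "x < front t" | "front t < x" "x < cA * t" | "cA * t < x" "x < cA * t + L" | "cA * t + L < x"
    using x front_less[OF t] by linarith
  then show ?thesis
  proof cases
    case 1
    with C f_neg show ?thesis by (intro classical_super_at_supersol_left)
  next
    case 2
    then show ?thesis using C f_le by (intro classical_super_at_supersol_middle) auto
  next
    case 3
    define W where "W = {p. front (fst p) < snd p} \<inter> {p. cA * fst p < snd p} \<inter> {p. snd p < cA * fst p + L}"
    have "0 \<le> (x - cA * t) / L" "(x - cA * t) / L \<le> 1" using 3 L_pos by auto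
    then have "0 \<le> pa ((x - cA * t) / L)" using pa_pos by (simp add: less_imp_le)
    moreover have "open W" unfolding W_def
      by (intro open_Int open_Collect_less continuous_intros continuous_on_front)
    moreover have "(t, x) \<in> W" using 3 front_less[OF t] by (simp add: W_def)
    moreover have "supersol C s y = exp (- (lam * (cA - c)) * s) * damped cA L (\<lambda>z. C * pa z) (y - cA * s)"
      if "(s, y) \<in> W" for s y
      using that by (intro supersol_pa) (auto simp: W_def)
    ultimately show ?thesis
      using C 3 f_le by (intro classical_super_at_supersol_frame[OF _ _ _ _ pa_deriv pa'_deriv]) auto
  next
    case 4
    define W where "W = {p. front (fst p) < snd p} \<inter> {p. cA * fst p + L < snd p}"
    have "1 \<le> (x - cA * t) / L" using 4 L_pos by auto
    then have "0 \<le> pb ((x - cA * t) / L)" using pb_pos by (simp add: less_imp_le)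
    moreover have "open W" unfolding W_def
      by (intro open_Int open_Collect_less continuous_intros continuous_on_front)
    moreover have "(t, x) \<in> W" using 4 front_less[OF t] L_pos by (simp add: W_def)
    moreover have "supersol C s y = exp (- (lam * (cA - c)) * s) * damped cA L (\<lambda>z. C * pb z) (y - cA * s)"
      if "(s, y) \<in> W" for s y
      using that by (intro supersol_pb) (auto simp: W_def)
    ultimately show ?thesis
      using C 4 f_le L_pos by (intro classical_super_at_supersol_frame[OF _ _ _ _ pb_deriv pb'_deriv]) auto
  qed
qed

lemma concave_kink_front:
  assumes "0 \<le> C" "0 \<le> t"
  shows "concave_kink (supersol C t) (front t)"
proof (rule concave_kinkI[where \<delta> = "cA * t - front t"])
  show "((\<lambda>_. C * 2) has_real_derivative 0) (at (front t))" by simp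
  show "((\<lambda>y. C * exp (- lam * (y - c * t))) has_real_derivative C * exp (- lam * (front t - c * t)) * - lam)
      (at (front t))"
    by (auto intro!: derivative_eq_intros)
  show "C * exp (- lam * (front t - c * t)) * - lam \<le> 0"
    using assms lam_pos by simp
  show "0 < cA * t - front t" using front_less[OF assms(2)] by simp
  show "supersol C t y = C * exp (- lam * (y - c * t))"
    if "front t \<le> y" "y < front t + (cA * t - front t)" for y
    using that exp_front supersol_left[of "front t" t C] supersol_middle[of t y C]
    by (cases "y = front t") auto
qed (simp add: supersol_left)

lemma concave_kink_cA:
  assumes "0 \<le> C" "0 \<le> t"
  shows "concave_kink (supersol C t) (cA * t)"
proof (rule concave_kinkI[where \<delta> = "min (cA * t - front t) L"])
  let ?a = "lam * (cA - c)"
  show "((\<lambda>y. C * exp (- lam * (y - c * t))) has_real_derivative C * exp (- lam * (cA * t - c * t)) * - lam)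
      (at (cA * t))"
    by (auto intro!: derivative_eq_intros)
  show "((\<lambda>y. exp (- ?a * t) * damped cA L (\<lambda>z. C * pa z) (y - cA * t)) has_real_derivative
      exp (- ?a * t) * damped cA L (\<lambda>z. C * pa' z / L - cA / 2 * (C * pa z)) (cA * t - cA * t)) (at (cA * t))"
    using L_pos by (intro damped_frame_has_real_derivative DERIV_cmult pa_deriv) simp
  have "sqrt (- l - r1) \<le> cA / 2 - lam" using lam_le by linarith
  then have "L * sqrt (- l - r1) \<le> L * (cA / 2 - lam)" using L_pos by (intro mult_left_mono) auto
  with pa'_0 have "pa' 0 \<le> L * (cA / 2 - lam)" by linarith
  then have "pa' 0 / L \<le> cA / 2 - lam"
    using L_pos by (simp add: pos_divide_le_eq mult.commute)
  then have "exp (- ?a * t) * (C * (pa' 0 / L - cA / 2)) \<le> exp (- ?a * t) * (C * - lam)"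
    using assms(1) by (intro mult_left_mono) auto
  then show "exp (- ?a * t) * damped cA L (\<lambda>z. C * pa' z / L - cA / 2 * (C * pa z)) (cA * t - cA * t)
      \<le> C * exp (- lam * (cA * t - c * t)) * - lam"
    by (simp add: damped_def pa_0 algebra_simps)
  show "0 < min (cA * t - front t) L" using front_less[OF assms(2)] L_pos by simp
  show "supersol C t y = C * exp (- lam * (y - c * t))"
    if "cA * t - min (cA * t - front t) L < y" "y \<le> cA * t" for y
  proof (cases "y = cA * t")
    case True
    then show ?thesis
      using supersol_pa[of t y C] front_less[OF assms(2)] L_pos
      by (simp add: damped_def pa_0 algebra_simps flip: exp_add)
  next
    case False
    then show ?thesis
      using that supersol_middle[of t y C] by simp
  qed
  show "supersol C t y = exp (- ?a * t) * damped cA L (\<lambda>z. C * pa z) (y - cA * t)"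
    if "cA * t \<le> y" "y < cA * t + min (cA * t - front t) L" for y
    using that front_less[OF assms(2)] by (intro supersol_pa) auto
qed

lemma concave_kink_cA_L:
  assumes "0 \<le> t"
  shows "concave_kink (supersol C t) (cA * t + L)"
proof (rule concave_kinkI[where \<delta> = L])
  let ?a = "lam * (cA - c)"
  show "((\<lambda>y. exp (- ?a * t) * damped cA L (\<lambda>z. C * pa z) (y - cA * t)) has_real_derivative
      exp (- ?a * t) * damped cA L (\<lambda>z. C * pa' z / L - cA / 2 * (C * pa z)) (cA * t + L - cA * t))
      (at (cA * t + L))"
    using L_pos by (intro damped_frame_has_real_derivative DERIV_cmult pa_deriv) simp
  show "((\<lambda>y. exp (- ?a * t) * damped cA L (\<lambda>z. C * pb z) (y - cA * t)) has_real_derivative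
      exp (- ?a * t) * damped cA L (\<lambda>z. C * pb' z / L - cA / 2 * (C * pb z)) (cA * t + L - cA * t))
      (at (cA * t + L))"
    using L_pos by (intro damped_frame_has_real_derivative DERIV_cmult pb_deriv) simp
  show "exp (- ?a * t) * damped cA L (\<lambda>z. C * pb' z / L - cA / 2 * (C * pb z)) (cA * t + L - cA * t)
      \<le> exp (- ?a * t) * damped cA L (\<lambda>z. C * pa' z / L - cA / 2 * (C * pa z)) (cA * t + L - cA * t)"
    using L_pos by (simp add: damped_def pa_pb_1 pa'_pb'_1)
  show "supersol C t y = exp (- ?a * t) * damped cA L (\<lambda>z. C * pa z) (y - cA * t)"
    if "cA * t + L - L < y" "y \<le> cA * t + L" for y
  proof (cases "y = cA * t + L")
    case True
    then show ?thesis
      using supersol_pb[of t y C] front_less[OF assms] L_pos by (simp add: damped_def pa_pb_1)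
  next
    case False
    then show ?thesis
      using that supersol_pa[of t y C] front_less[OF assms] by simp
  qed
  show "supersol C t y = exp (- ?a * t) * damped cA L (\<lambda>z. C * pb z) (y - cA * t)"
    if "cA * t + L \<le> y" "y < cA * t + L + L" for y
    using that front_less[OF assms] L_pos by (intro supersol_pb) auto
qed (use L_pos in simp)

theorem gen_supersolution_supersol:
  assumes C: "1 \<le> C"
    and f_le: "\<And>t x w. t \<in> time_dom T \<Longrightarrow> 0 \<le> w \<Longrightarrow>
      f t x w \<le> (if x < cA * t then r1 else if x < cA * t + L then r2 else r3) * w"
    and f_neg: "\<And>t x w. 1 < w \<Longrightarrow> f t x w < 0"
  shows "gen_supersolution (supersol C) f T"
proof -
  define gs where "gs = [front, \<lambda>t. cA * t, \<lambda>t. cA * t + L]"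
  have t_nonneg: "0 \<le> t" if "t \<in> time_dom T" for t
    using that by (simp add: time_dom_def)
  have affine_C1: "\<exists>g'. (\<forall>t\<in>time_dom T. ((\<lambda>t. a * t + b) has_real_derivative g' t) (at t within time_dom T))
      \<and> continuous_on (time_dom T) g'" for a b :: real
    by (intro exI[of _ "\<lambda>_. a"]) (auto intro!: derivative_eq_intros)
  show ?thesis
    unfolding gen_supersolution_def
  proof (intro conjI exI[of _ gs] ballI allI impI)
    show "continuous_on (time_dom T \<times> UNIV) (\<lambda>(t, x). supersol C t x)"
      by (rule continuous_on_subset[OF continuous_on_supersol]) (auto simp: time_dom_def)
    show "\<exists>g'. (\<forall>t\<in>time_dom T. (g has_real_derivative g' t) (at t within time_dom T))
        \<and> continuous_on (time_dom T) g'" if "g \<in> set gs" for g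
    proof -
      from that consider "g = front" | "g = (\<lambda>t. cA * t)" | "g = (\<lambda>t. cA * t + L)"
        by (auto simp: gs_def)
      then show ?thesis
        using affine_C1[of c "- (ln 2 / lam)"] affine_C1[of cA 0] affine_C1[of cA L]
        by cases (simp_all add: front_def[abs_def])
    qed
    show "(gs ! i) t < (gs ! Suc i) t" if "t \<in> time_dom T" "Suc i < length gs" for t i
      using that front_less[OF t_nonneg[OF that(1)]] L_pos by (auto simp: gs_def less_Suc_eq)
    show "classical_super_at (supersol C) f T t x"
      if "t \<in> time_dom T" "\<forall>g\<in>set gs. x \<noteq> g t" for t x
      using that by (intro classical_super_at_supersol[OF C t_nonneg] f_le f_neg) (auto simp: gs_def)
    show "\<exists>dl dr. ((\<lambda>h. (supersol C t (g t + h) - supersol C t (g t)) / h) \<longlongrightarrow> dl) (at_left 0) \<and>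
        ((\<lambda>h. (supersol C t (g t + h) - supersol C t (g t)) / h) \<longlongrightarrow> dr) (at_right 0) \<and> dr \<le> dl"
      if "t \<in> time_dom T" "g \<in> set gs" for t g
    proof -
      have "concave_kink (supersol C t) (g t)"
        using that C t_nonneg[OF that(1)]
        by (auto simp: gs_def intro: concave_kink_front concave_kink_cA concave_kink_cA_L)
      then show ?thesis unfolding concave_kink_def .
    qed
  qed
qed

end

section \<open>The principal eigenfunction\<close>

lemma sin_arccot: "sin (arccot y) = cos (arctan y)"
  by (simp add: arccot_def sin_diff)

lemma cos_arccot: "cos (arccot y) = y * cos (arctan y)"
  by (simp add: arccot_def cos_diff cos_arctan sin_arctan)

lemma cot_arccot: "cot (arccot y) = y"
  by (simp add: cot_def sin_arccot cos_arccot)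

lemma sin_arccot_pos: "0 < sin (arccot y)"
  by (simp add: sin_arccot cos_arctan add_pos_nonneg)

lemma arccot_pos: "0 < arccot y"
  using arctan_ubound[of y] by (simp add: arccot_def)

definition sine_arc :: "real \<Rightarrow> real \<Rightarrow> real \<Rightarrow> real" where
  "sine_arc \<omega> \<theta> y = sin (\<omega> * y + \<theta>) / sin \<theta>"

lemma sine_arc_0: "sin \<theta> \<noteq> 0 \<Longrightarrow> sine_arc \<omega> \<theta> 0 = 1"
  by (simp add: sine_arc_def)

lemma sine_arc_has_real_derivative:
  "(sine_arc \<omega> \<theta> has_real_derivative \<omega> * cos (\<omega> * y + \<theta>) / sin \<theta>) (at y)"
  unfolding sine_arc_def by (rule DERIV_cdivide) (auto intro!: derivative_eq_intros)

lemma sine_arc_deriv_has_real_derivative: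
  "((\<lambda>y. \<omega> * cos (\<omega> * y + \<theta>) / sin \<theta>) has_real_derivative - \<omega>\<^sup>2 * sine_arc \<omega> \<theta> y) (at y)"
proof -
  have "((\<lambda>y. \<omega> * cos (\<omega> * y + \<theta>)) has_real_derivative - \<omega>\<^sup>2 * sin (\<omega> * y + \<theta>)) (at y)"
    by (auto intro!: derivative_eq_intros simp: power2_eq_square)
  from DERIV_cdivide[OF this, of "sin \<theta>"] show ?thesis by (simp add: sine_arc_def)
qed

lemma sine_arc_pos:
  assumes "0 < \<theta>" "0 \<le> \<omega>" "\<omega> + \<theta> < pi" "0 \<le> y" "y \<le> 1"
  shows "0 < sine_arc \<omega> \<theta> y"
proof -
  have "0 < \<omega> * y + \<theta>" "\<omega> * y + \<theta> < pi"
    using assms mult_left_le[of y \<omega>] mult_nonneg_nonneg[of \<omega> y] by linarith+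
  then have "0 < sin (\<omega> * y + \<theta>)" "0 < sin \<theta>"
    using assms by (auto intro!: sin_gt_zero)
  then show ?thesis by (simp add: sine_arc_def)
qed

lemma cot_inj:
  assumes "0 < x" "x < pi" "0 < y" "y < pi" "cot x = cot y"
  shows "x = y"
proof -
  have "pi / 2 - z = arctan (cot z)" if "0 < z" "z < pi" for z
    using that arctan_tan[of "pi / 2 - z"] by (simp add: tan_cot')
  then show ?thesis using assms by (metis diff_left_imp_eq)
qed

lemma cot_arctan_add:
  fixes p q s :: real
  assumes "0 < s" "0 \<le> p" "0 \<le> q" "0 < p + q"
  shows "cot (arctan (p / s) + arctan (q / s)) = (s\<^sup>2 - p * q) / (s * (p + q))"
proof -
  define ca where "ca = cos (arctan (p / s))"
  define cb where "cb = cos (arctan (q / s))"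
  have "0 < ca" "0 < cb" by (simp_all add: ca_def cb_def cos_arctan add_pos_nonneg)
  have "cot (arctan (p / s) + arctan (q / s)) = (ca * cb - p / s * ca * (q / s * cb)) / (p / s * ca * cb + ca * (q / s * cb))"
    by (simp add: cot_def cos_add sin_add tan_arctan ca_def cb_def sin_arctan cos_arctan)
  also have "\<dots> = (ca * cb / s\<^sup>2 * (s\<^sup>2 - p * q)) / (ca * cb / s\<^sup>2 * (s * (p + q)))"
  proof -
    have "ca * cb - p / s * ca * (q / s * cb) = ca * cb / s\<^sup>2 * (s\<^sup>2 - p * q)"
      "p / s * ca * cb + ca * (q / s * cb) = ca * cb / s\<^sup>2 * (s * (p + q))"
      using assms by (simp_all add: field_simps power2_eq_square)
    then show ?thesis by simp
  qed
  also have "\<dots> = (s\<^sup>2 - p * q) / (s * (p + q))"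
    using \<open>0 < ca\<close> \<open>0 < cb\<close> assms by (intro mult_divide_mult_cancel_left) simp
  finally show ?thesis .
qed

text \<open>In case (1), \<open>\<lambda>\<^sub>1\<close> is the zero of \<open>phase_gap\<close>: the phase \<open>L sqrt (r2 + x)\<close> gained by the
  sine on \<open>[0, 1]\<close> must equal the two phases needed to meet the decaying exponentials at the ends.\<close>
definition phase_gap :: "real \<Rightarrow> real \<Rightarrow> real \<Rightarrow> real \<Rightarrow> real \<Rightarrow> real" where
  "phase_gap r1 r2 r3 L x = L * sqrt (r2 + x)
     - arctan (sqrt (- r1 - x) / sqrt (r2 + x)) - arctan (sqrt (- r3 - x) / sqrt (r2 + x))"

lemma lambda1_equation_iff_phase_gap:
  assumes x: "- r2 < x" "x < - max r1 r3" and L: "0 < L" "L * sqrt (r2 + x) < pi"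
  shows "cot (L * sqrt (r2 + x)) = (r2 + x - sqrt ((r1 + x) * (r3 + x))) /
      (sqrt (r2 + x) * (sqrt (- r1 - x) + sqrt (- r3 - x)))
    \<longleftrightarrow> phase_gap r1 r2 r3 L x = 0"
proof -
  define s p q where "s = sqrt (r2 + x)" and "p = sqrt (- r1 - x)" and "q = sqrt (- r3 - x)"
  have "0 < s" "0 < p" "0 < q" using x by (simp_all add: s_def p_def q_def)
  have "(r1 + x) * (r3 + x) = (- r1 - x) * (- r3 - x)" by (simp add: algebra_simps)
  then have "sqrt ((r1 + x) * (r3 + x)) = p * q" by (simp add: p_def q_def real_sqrt_mult)
  moreover have "s\<^sup>2 = r2 + x" using x by (simp add: s_def)
  ultimately have rhs: "(r2 + x - sqrt ((r1 + x) * (r3 + x))) / (s * (p + q))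
      = cot (arctan (p / s) + arctan (q / s))"
    using cot_arctan_add[of s p q] \<open>0 < s\<close> \<open>0 < p\<close> \<open>0 < q\<close> by simp
  have "0 < arctan (p / s)" "0 < arctan (q / s)"
    using \<open>0 < s\<close> \<open>0 < p\<close> \<open>0 < q\<close> by simp_all
  then have "0 < arctan (p / s) + arctan (q / s)" "arctan (p / s) + arctan (q / s) < pi"
    using arctan_ubound[of "p / s"] arctan_ubound[of "q / s"] by linarith+
  moreover have "0 < L * s" "L * s < pi" using \<open>0 < s\<close> L by (auto simp: s_def)
  ultimately have "cot (L * s) = cot (arctan (p / s) + arctan (q / s))
      \<longleftrightarrow> L * s = arctan (p / s) + arctan (q / s)"
    using cot_inj[of "L * s" "arctan (p / s) + arctan (q / s)"] by auto
  then show ?thesis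
    unfolding rhs[unfolded s_def p_def q_def] by (auto simp: phase_gap_def s_def p_def q_def)
qed

lemma phase_gap_strict_mono:
  assumes "0 < L" "- r2 < x" "x < y" "y \<le> - max r1 r3"
  shows "phase_gap r1 r2 r3 L x < phase_gap r1 r2 r3 L y"
proof -
  have sx: "0 < sqrt (r2 + x)" and sxy: "sqrt (r2 + x) < sqrt (r2 + y)" using assms by simp_all
  have "sqrt (- r - y) / sqrt (r2 + y) \<le> sqrt (- r - x) / sqrt (r2 + x)" if "r \<le> max r1 r3" for r
    by (rule frac_le) (use assms sx sxy that in auto)
  then have "arctan (sqrt (- r - y) / sqrt (r2 + y)) \<le> arctan (sqrt (- r - x) / sqrt (r2 + x))"
    if "r \<le> max r1 r3" for r
    using that arctan_monotone' by blast
  from this[of r1] this[of r3] have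
    "arctan (sqrt (- r1 - y) / sqrt (r2 + y)) \<le> arctan (sqrt (- r1 - x) / sqrt (r2 + x))"
    "arctan (sqrt (- r3 - y) / sqrt (r2 + y)) \<le> arctan (sqrt (- r3 - x) / sqrt (r2 + x))"
    by simp_all
  moreover have "L * sqrt (r2 + x) < L * sqrt (r2 + y)" using sxy assms(1) by simp
  ultimately show ?thesis
    unfolding phase_gap_def by linarith
qed

lemma Lbar_eq_arctan:
  assumes "r1 \<noteq> r3" "max r1 r3 < r2"
  shows "Lbar r1 r2 r3 = arctan (sqrt (\<bar>r1 - r3\<bar> / (r2 - max r1 r3))) / sqrt (r2 - max r1 r3)"
proof -
  define w where "w = sqrt (\<bar>r1 - r3\<bar> / (r2 - max r1 r3))"
  have "0 < w" using assms by (simp add: w_def)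
  have "sqrt ((r2 - max r1 r3) / \<bar>r1 - r3\<bar>) = 1 / w"
    by (simp add: w_def real_sqrt_divide)
  moreover have "arctan (1 / w) = sgn w * pi / 2 - arctan w"
    using \<open>0 < w\<close> by (intro Transcendental.arctan_inverse) simp
  moreover have "sgn w = 1" using \<open>0 < w\<close> by simp
  ultimately show ?thesis
    using assms by (simp add: Lbar_def arccot_def w_def)
qed

lemma phase_gap_at_max:
  assumes "max r1 r3 < r2"
  shows "phase_gap r1 r2 r3 L (- max r1 r3) = (L - Lbar r1 r2 r3) * sqrt (r2 - max r1 r3)"
proof (cases "r1 = r3")
  case True
  then show ?thesis by (simp add: phase_gap_def Lbar_def)
next
  case False
  have "0 < sqrt (r2 - max r1 r3)" using assms by simp
  moreover have "arctan (sqrt (- r1 + max r1 r3) / sqrt (r2 - max r1 r3))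
      + arctan (sqrt (- r3 + max r1 r3) / sqrt (r2 - max r1 r3))
      = arctan (sqrt (\<bar>r1 - r3\<bar> / (r2 - max r1 r3)))"
    by (cases "r1 \<le> r3") (simp_all add: max_def real_sqrt_divide)
  ultimately show ?thesis
    using False assms by (simp add: phase_gap_def Lbar_eq_arctan algebra_simps)
qed

lemma phase_gap_neg:
  assumes "0 < L" "- r2 < x" "2 * (r2 + x) \<le> r2 - max r1 r3" "8 * L\<^sup>2 * (r2 + x) \<le> pi\<^sup>2"
  shows "phase_gap r1 r2 r3 L x < 0"
proof -
  have s: "0 < sqrt (r2 + x)" using assms by simp
  have "pi / 4 \<le> arctan (sqrt (- r - x) / sqrt (r2 + x))" if "r \<le> max r1 r3" for r
  proof -
    have "sqrt (r2 + x) \<le> sqrt (- r - x)" using assms that by simp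
    then have "1 \<le> sqrt (- r - x) / sqrt (r2 + x)" using s by simp
    then show ?thesis using arctan_monotone'[of 1] by simp
  qed
  from this[of r1] this[of r3] have "pi / 4 \<le> arctan (sqrt (- r1 - x) / sqrt (r2 + x))"
    "pi / 4 \<le> arctan (sqrt (- r3 - x) / sqrt (r2 + x))"
    by simp_all
  moreover have "L * sqrt (r2 + x) < pi / 2"
  proof (rule power2_less_imp_less)
    have "(L * sqrt (r2 + x))\<^sup>2 = L\<^sup>2 * (r2 + x)" using assms by (simp add: power_mult_distrib)
    also have "\<dots> \<le> pi\<^sup>2 / 8" using assms by simp
    also have "\<dots> < (pi / 2)\<^sup>2" by (simp add: power_divide)
    finally show "(L * sqrt (r2 + x))\<^sup>2 < (pi / 2)\<^sup>2" .
  qed simp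
  ultimately show ?thesis
    unfolding phase_gap_def by linarith
qed

lemma phase_gap_has_root:
  assumes L: "0 < L" "Lbar r1 r2 r3 < L" and r2: "max r1 r3 < r2"
  defines "hi \<equiv> min (- max r1 r3) (pi\<^sup>2 / L\<^sup>2 - r2)"
  obtains l0 where "- r2 < l0" "l0 < hi" "phase_gap r1 r2 r3 L l0 = 0"
proof -
  define m where "m = max r1 r3"
  define \<epsilon> where "\<epsilon> = min ((r2 - m) / 2) (pi\<^sup>2 / (8 * L\<^sup>2))"
  define lo where "lo = - r2 + \<epsilon>"
  have "pi\<^sup>2 / (8 * L\<^sup>2) \<le> pi\<^sup>2 / L\<^sup>2" using L by (simp add: frac_le)
  moreover have \<epsilon>: "\<epsilon> \<le> (r2 - m) / 2" "\<epsilon> \<le> pi\<^sup>2 / (8 * L\<^sup>2)" "0 < \<epsilon>"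
    using r2 L by (simp_all only: \<epsilon>_def min.cobounded1 min.cobounded2) (simp add: m_def)
  ultimately have lo: "- r2 < lo" "lo \<le> hi"
    using r2 by (auto simp: lo_def hi_def m_def)
  have "phase_gap r1 r2 r3 L lo < 0"
    using r2 L \<epsilon> by (intro phase_gap_neg) (auto simp: lo_def m_def field_simps)
  moreover have hi_pos: "0 < phase_gap r1 r2 r3 L hi"
  proof (cases "pi\<^sup>2 / L\<^sup>2 - r2 \<le> - m")
    case True
    then have "L * sqrt (r2 + hi) = pi" using L by (simp add: hi_def m_def real_sqrt_divide)
    then show ?thesis
      using arctan_ubound[of "sqrt (- r1 - hi) / sqrt (r2 + hi)"] arctan_ubound[of "sqrt (- r3 - hi) / sqrt (r2 + hi)"]
      by (simp add: phase_gap_def)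
  next
    case False
    then show ?thesis using phase_gap_at_max[OF r2, of L] L r2 by (simp add: hi_def m_def)
  qed
  moreover have "continuous_on {lo..hi} (phase_gap r1 r2 r3 L)"
    unfolding phase_gap_def using lo by (intro continuous_intros) auto
  ultimately obtain l0 where "lo \<le> l0" "l0 \<le> hi" "phase_gap r1 r2 r3 L l0 = 0"
    using IVT'[of "phase_gap r1 r2 r3 L" lo 0 hi] lo(2) by auto
  with hi_pos lo(1) show ?thesis
    by (intro that[of l0]) (auto simp: order.order_iff_strict)
qed

lemma lambda1_zero_of_phase_gap:
  assumes L: "0 < L" "Lbar r1 r2 r3 < L" and r2: "max r1 r3 < r2"
  shows "- r2 < lambda1 r1 r2 r3 L" "lambda1 r1 r2 r3 L < - max r1 r3"
    "phase_gap r1 r2 r3 L (lambda1 r1 r2 r3 L) = 0"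
proof -
  define P where "P l \<longleftrightarrow> - r2 < l \<and> l < min (- max r1 r3) (pi\<^sup>2 / L\<^sup>2 - r2) \<and>
    cot (L * sqrt (r2 + l)) = (r2 + l - sqrt ((r1 + l) * (r3 + l))) /
      (sqrt (r2 + l) * (sqrt (- r1 - l) + sqrt (- r3 - l)))" for l
  have lambda1_eq: "lambda1 r1 r2 r3 L = (THE l. P l)"
    using L by (simp add: lambda1_def P_def)
  have below_pi: "L * sqrt (r2 + l) < pi" if "- r2 < l" "l < pi\<^sup>2 / L\<^sup>2 - r2" for l
  proof -
    have "sqrt (r2 + l) < sqrt (pi\<^sup>2 / L\<^sup>2)" using that by simp
    also have "\<dots> = pi / L" using L by (simp add: real_sqrt_divide)
    finally show ?thesis using L by (simp add: field_simps)
  qed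
  have P_iff: "P l \<longleftrightarrow> - r2 < l \<and> l < min (- max r1 r3) (pi\<^sup>2 / L\<^sup>2 - r2) \<and> phase_gap r1 r2 r3 L l = 0"
    for l
    using lambda1_equation_iff_phase_gap[of r2 l r1 r3 L] below_pi[of l] L(1) by (auto simp: P_def)
  obtain l0 where "P l0"
    using phase_gap_has_root[OF L r2] by (auto simp: P_iff)
  moreover have "l = l0" if "P l" for l
    using that \<open>P l0\<close> L(1) phase_gap_strict_mono[of L r2 l l0 r1 r3] phase_gap_strict_mono[of L r2 l0 l r1 r3]
    by (cases l l0 rule: linorder_cases) (auto simp: P_iff)
  ultimately have "lambda1 r1 r2 r3 L = l0"
    unfolding lambda1_eq by (rule the_equality)
  then show "- r2 < lambda1 r1 r2 r3 L" "lambda1 r1 r2 r3 L < - max r1 r3"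
    "phase_gap r1 r2 r3 L (lambda1 r1 r2 r3 L) = 0"
    using \<open>P l0\<close> by (auto simp: P_iff)
qed

lemma lambda1_arc:
  assumes "0 < L" "Lbar r1 r2 r3 < L" "max r1 r3 < r2"
  defines "l \<equiv> lambda1 r1 r2 r3 L"
  defines "s \<equiv> sqrt (r2 + l)" and "q \<equiv> sqrt (- r3 - l)" and "\<theta> \<equiv> arccot (sqrt ((- r1 - l) / (r2 + l)))"
  shows "l \<le> - r1" "0 < L * s" "0 < \<theta>" "L * s + \<theta> < pi" "0 < sin \<theta>" "0 < sin (L * s + \<theta>)"
    "s * cos (L * s + \<theta>) = - q * sin (L * s + \<theta>)" "s\<^sup>2 = r2 + l" "q\<^sup>2 = - r3 - l"
    "s * cot \<theta> = sqrt (- l - r1)"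
proof -
  have l: "- r2 < l" "l < - max r1 r3" "phase_gap r1 r2 r3 L l = 0"
    using lambda1_zero_of_phase_gap[OF assms(1-3)] by (simp_all add: l_def)
  define p where "p = sqrt (- r1 - l)"
  have "0 < s" "0 < p" "0 < q" using l by (simp_all add: s_def p_def q_def)
  show "l \<le> - r1" "0 < L * s" "0 < \<theta>" "0 < sin \<theta>" "s\<^sup>2 = r2 + l" "q\<^sup>2 = - r3 - l"
    using l assms(1) \<open>0 < s\<close> by (simp_all add: s_def q_def \<theta>_def arccot_pos sin_arccot_pos)
  have \<theta>_eq: "\<theta> = arccot (p / s)" by (simp add: \<theta>_def p_def s_def real_sqrt_divide)
  define \<beta> where "\<beta> = arctan (q / s)"
  have "L * s + \<theta> = pi / 2 + \<beta>"
    using l(3) by (simp add: phase_gap_def \<theta>_eq arccot_def \<beta>_def s_def p_def q_def)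
  then have sin_Ls: "sin (L * s + \<theta>) = cos \<beta>" and cos_Ls: "cos (L * s + \<theta>) = - sin \<beta>"
    and "L * s + \<theta> < pi"
    using arctan_ubound[of "q / s"] by (simp_all add: sin_add cos_add \<beta>_def)
  then show "L * s + \<theta> < pi" "0 < sin (L * s + \<theta>)"
    by (simp_all add: \<beta>_def cos_arctan add_pos_nonneg)
  show "s * cos (L * s + \<theta>) = - q * sin (L * s + \<theta>)"
    using \<open>0 < s\<close> by (simp add: sin_Ls cos_Ls \<beta>_def sin_arctan cos_arctan)
  show "s * cot \<theta> = sqrt (- l - r1)"
    using \<open>0 < s\<close> by (simp add: \<theta>_eq cot_arccot p_def minus_diff_commute)
qed

lemma phi1_eigenprofile_above_Lbar:
  assumes L: "0 < L" "Lbar r1 r2 r3 < L" and r2: "max r1 r3 < r2"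
  shows "\<exists>pa pa' pb pb'. eigenprofile r1 r2 r3 L (lambda1 r1 r2 r3 L) pa pa' pb pb' \<and>
    (\<forall>y\<ge>0. phi1 r1 r2 r3 L y = (if y < 1 then pa y else pb y))"
proof -
  define l where "l = lambda1 r1 r2 r3 L"
  define s q \<theta> where "s = sqrt (r2 + l)" and "q = sqrt (- r3 - l)"
    and "\<theta> = arccot (sqrt ((- r1 - l) / (r2 + l)))"
  note arc = lambda1_arc[OF L r2, folded l_def, folded s_def q_def \<theta>_def]
  define pa where "pa = sine_arc (L * s) \<theta>"
  define pa' where "pa' y = L * s * cos (L * s * y + \<theta>) / sin \<theta>" for y
  define pb where "pb y = pa 1 * exp (- L * q * (y - 1))" for y
  define pb' where "pb' y = pa 1 * (exp (- L * q * (y - 1)) * (- L * q))" for y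
  have "eigenprofile r1 r2 r3 L l pa pa' pb pb'"
  proof
    show "(pa has_real_derivative pa' y) (at y)" for y
      unfolding pa_def pa'_def by (rule sine_arc_has_real_derivative)
    show "(pa' has_real_derivative - (L\<^sup>2 * (r2 + l)) * pa y) (at y)" for y
      unfolding pa_def pa'_def using sine_arc_deriv_has_real_derivative[of "L * s" \<theta> y] arc(8)
      by (simp add: power_mult_distrib)
    show "(pb has_real_derivative pb' y) (at y)" for y
      unfolding pb_def pb'_def by (auto intro!: derivative_eq_intros)
    show "(pb' has_real_derivative - (L\<^sup>2 * (r3 + l)) * pb y) (at y)" for y
    proof -
      have "(pb' has_real_derivative pb y * (L * q)\<^sup>2) (at y)"
        unfolding pb_def pb'_def by (auto intro!: derivative_eq_intros simp: power2_eq_square)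
      moreover have "pb y * (L * q)\<^sup>2 = - (L\<^sup>2 * (r3 + l)) * pb y"
        unfolding power_mult_distrib arc(9) by (simp add: algebra_simps)
      ultimately show ?thesis by simp
    qed
    show "pa 0 = 1" using arc(5) by (simp add: pa_def sine_arc_0)
    show "pa 1 = pb 1" by (simp add: pb_def)
    have "pa' 1 = L * (s * cos (L * s + \<theta>)) / sin \<theta>" by (simp add: pa'_def)
    also have "\<dots> = pb' 1" using arc(7) by (simp add: pb'_def pa_def sine_arc_def)
    finally show "pa' 1 = pb' 1" .
    show "0 < pa y" if "0 \<le> y" "y \<le> 1" for y
      unfolding pa_def using that arc by (intro sine_arc_pos) auto
    show "0 < pb y" for y
      using arc by (simp add: pb_def pa_def sine_arc_def)
    have "pa' 0 = L * (s * cot \<theta>)" by (simp add: pa'_def cot_def)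
    then show "pa' 0 \<le> L * sqrt (- l - r1)" using arc(10) by simp
  qed (use L arc in auto)
  moreover have "phi1 r1 r2 r3 L y = (if y < 1 then pa y else pb y)" if "0 \<le> y" for y
    using L(2) that arc(5)
    by (auto simp: phi1_def Let_def l_def[symmetric] s_def[symmetric] q_def[symmetric] \<theta>_def[symmetric]
        pa_def pb_def sine_arc_def)
  ultimately show ?thesis unfolding l_def by blast
qed

lemma Lbar_commute: "Lbar r3 r2 r1 = Lbar r1 r2 r3"
  by (simp add: Lbar_def max.commute abs_minus_commute)

lemma Lbar_arc:
  assumes "a < b" "b < r2" "0 < L" "L \<le> Lbar a r2 b"
  defines "k \<equiv> sqrt (r2 - b)" and "\<theta> \<equiv> arccot (sqrt ((b - a) / (r2 - b)))"
  shows "0 < L * k" "0 < \<theta>" "L * k + \<theta> \<le> pi / 2" "0 < sin \<theta>" "0 < sin (L * k + \<theta>)"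
    "0 \<le> cos (L * k + \<theta>)" "k\<^sup>2 = r2 - b" "k * cot \<theta> = sqrt (b - a)"
proof -
  show "0 < L * k" "0 < \<theta>" "0 < sin \<theta>" "k\<^sup>2 = r2 - b"
    using assms by (simp_all add: k_def \<theta>_def arccot_pos sin_arccot_pos)
  have "Lbar a r2 b = arctan (sqrt ((b - a) / (r2 - b))) / k"
    using assms Lbar_eq_arctan[of a b r2] by (simp add: max_def k_def)
  then have "L * k \<le> arctan (sqrt ((b - a) / (r2 - b)))"
    using assms by (simp add: k_def pos_le_divide_eq)
  then show "L * k + \<theta> \<le> pi / 2" by (simp add: \<theta>_def arccot_def)
  with \<open>0 < L * k\<close> \<open>0 < \<theta>\<close> show "0 < sin (L * k + \<theta>)" "0 \<le> cos (L * k + \<theta>)"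
    using pi_gt_zero by (intro sin_gt_zero cos_ge_zero; linarith)+
  show "k * cot \<theta> = sqrt (b - a)"
    using assms by (simp add: k_def \<theta>_def cot_arccot real_sqrt_mult[symmetric])
qed

lemma phi1_eigenprofile_r1_less_r3:
  assumes L: "0 < L" "\<not> Lbar r1 r2 r3 < L" and r: "r1 < r3" "max r1 r3 < r2"
  shows "\<exists>pa pa' pb pb'. eigenprofile r1 r2 r3 L (lambda1 r1 r2 r3 L) pa pa' pb pb' \<and>
    (\<forall>y\<ge>0. phi1 r1 r2 r3 L y = (if y < 1 then pa y else pb y))"
proof -
  have l: "lambda1 r1 r2 r3 L = - r3" using L(2) r(1) by (simp add: lambda1_def max_def)
  define k \<theta> where "k = sqrt (r2 - r3)" and "\<theta> = arccot (sqrt ((r3 - r1) / (r2 - r3)))"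
  have "L \<le> Lbar r1 r2 r3" using L(2) by simp
  note arc = Lbar_arc[of r1 r3 r2 L, folded k_def \<theta>_def, OF r(1) _ L(1) this]
  have "0 < L * k" "0 < \<theta>" "L * k + \<theta> \<le> pi / 2" "0 < sin \<theta>" "0 < sin (L * k + \<theta>)"
    "0 \<le> cos (L * k + \<theta>)" "k\<^sup>2 = r2 - r3" "k * cot \<theta> = sqrt (r3 - r1)"
    using arc r(2) by simp_all
  have "0 < k" using r by (simp add: k_def)
  define pa where "pa = sine_arc (L * k) \<theta>"
  define pa' where "pa' y = L * k * cos (L * k * y + \<theta>) / sin \<theta>" for y
  define pb where "pb y = sin (L * k + \<theta>) / sin \<theta> + k * cos (L * k + \<theta>) / sin \<theta> * L * (y - 1)" for y
  define pb' where "pb' y = k * cos (L * k + \<theta>) / sin \<theta> * L" for y :: real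
  have "eigenprofile r1 r2 r3 L (- r3) pa pa' pb pb'"
  proof
    show "(pa has_real_derivative pa' y) (at y)" for y
      unfolding pa_def pa'_def by (rule sine_arc_has_real_derivative)
    show "(pa' has_real_derivative - (L\<^sup>2 * (r2 + - r3)) * pa y) (at y)" for y
      unfolding pa_def pa'_def using sine_arc_deriv_has_real_derivative[of "L * k" \<theta> y] \<open>k\<^sup>2 = r2 - r3\<close>
      by (simp add: power_mult_distrib)
    show "(pb has_real_derivative pb' y) (at y)" for y
      unfolding pb_def pb'_def using \<open>0 < sin \<theta>\<close> by (auto intro!: derivative_eq_intros)
    show "(pb' has_real_derivative - (L\<^sup>2 * (r3 + - r3)) * pb y) (at y)" for y
      unfolding pb'_def by simp
    show "pa 0 = 1" using \<open>0 < sin \<theta>\<close> by (simp add: pa_def sine_arc_0)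
    show "pa 1 = pb 1" "pa' 1 = pb' 1" by (simp_all add: pa_def pb_def pa'_def pb'_def sine_arc_def)
    show "0 < pa y" if "0 \<le> y" "y \<le> 1" for y
      unfolding pa_def using that \<open>L * k + \<theta> \<le> pi / 2\<close> \<open>0 < L * k\<close> \<open>0 < \<theta>\<close> pi_gt_zero
      by (intro sine_arc_pos) auto
    show "0 < pb y" if "1 \<le> y" for y
      using that \<open>0 < sin (L * k + \<theta>)\<close> \<open>0 \<le> cos (L * k + \<theta>)\<close> \<open>0 < sin \<theta>\<close> \<open>0 < k\<close> L(1)
      by (simp add: pb_def add_pos_nonneg)
    have "pa' 0 = L * (k * cot \<theta>)" by (simp add: pa'_def cot_def)
    then show "pa' 0 \<le> L * sqrt (- (- r3) - r1)"
      using \<open>k * cot \<theta> = sqrt (r3 - r1)\<close> by simp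
  qed (use L r in auto)
  moreover have "phi1 r1 r2 r3 L y = (if y < 1 then pa y else pb y)" if "0 \<le> y" for y
    using L(2) r(1) that \<open>0 < sin \<theta>\<close>
    by (auto simp: phi1_def phi_case2_def Let_def k_def[symmetric] \<theta>_def[symmetric]
        pa_def pb_def sine_arc_def)
  ultimately show ?thesis unfolding l by blast
qed

lemma phi1_eigenprofile_r3_less_r1:
  assumes L: "0 < L" "\<not> Lbar r1 r2 r3 < L" and r: "r3 < r1" "max r1 r3 < r2"
  shows "\<exists>pa pa' pb pb'. eigenprofile r1 r2 r3 L (lambda1 r1 r2 r3 L) pa pa' pb pb' \<and>
    (\<forall>y\<ge>0. phi1 r1 r2 r3 L y = (if y < 1 then pa y else pb y))"
proof -
  have l: "lambda1 r1 r2 r3 L = - r1" using L(2) r(1) by (simp add: lambda1_def max_def)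
  define k \<theta> where "k = sqrt (r2 - r1)" and "\<theta> = arccot (sqrt ((r1 - r3) / (r2 - r1)))"
  define \<sigma> where "\<sigma> = sqrt (r1 - r3)"
  have "L \<le> Lbar r3 r2 r1" using L(2) by (simp add: Lbar_commute)
  note arc = Lbar_arc[of r3 r1 r2 L, folded k_def \<theta>_def \<sigma>_def, OF r(1) _ L(1) this]
  have "0 < L * k" "0 < \<theta>" "L * k + \<theta> \<le> pi / 2" "0 < sin \<theta>" "0 < sin (L * k + \<theta>)"
    "0 \<le> cos (L * k + \<theta>)" "k\<^sup>2 = r2 - r1" "k * cot \<theta> = \<sigma>" "\<sigma>\<^sup>2 = r1 - r3"
    using arc r by (simp_all add: \<sigma>_def)
  define P where "P = sine_arc (L * k) \<theta> 1"
  have "0 < P" using \<open>0 < sin (L * k + \<theta>)\<close> \<open>0 < sin \<theta>\<close> by (simp add: P_def sine_arc_def)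
  define pa where "pa y = sine_arc (L * k) \<theta> (1 - y) / P" for y
  define pa' where "pa' y = - (L * k * cos (L * k * (1 - y) + \<theta>) / sin \<theta>) / P" for y
  define pb where "pb y = exp (L * \<sigma> * (1 - y)) / P" for y
  define pb' where "pb' y = - (L * \<sigma>) * exp (L * \<sigma> * (1 - y)) / P" for y
  have "eigenprofile r1 r2 r3 L (- r1) pa pa' pb pb'"
  proof
    show "(pa has_real_derivative pa' y) (at y)" for y
      unfolding pa_def pa'_def sine_arc_def using \<open>0 < P\<close> \<open>0 < sin \<theta>\<close>
      by (auto intro!: derivative_eq_intros simp: field_simps)
    show "(pa' has_real_derivative - (L\<^sup>2 * (r2 + - r1)) * pa y) (at y)" for y
      unfolding pa_def pa'_def sine_arc_def using \<open>0 < P\<close> \<open>0 < sin \<theta>\<close> \<open>k\<^sup>2 = r2 - r1\<close>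
      by (auto intro!: derivative_eq_intros simp: field_simps power2_eq_square)
    show "(pb has_real_derivative pb' y) (at y)" for y
      unfolding pb_def pb'_def using \<open>0 < P\<close> by (auto intro!: derivative_eq_intros simp: field_simps)
    show "(pb' has_real_derivative - (L\<^sup>2 * (r3 + - r1)) * pb y) (at y)" for y
      unfolding pb_def pb'_def using \<open>0 < P\<close> \<open>\<sigma>\<^sup>2 = r1 - r3\<close>
      by (auto intro!: derivative_eq_intros simp: field_simps power2_eq_square)
    show "pa 0 = 1" using \<open>0 < P\<close> by (simp add: pa_def P_def)
    show "pa 1 = pb 1" using \<open>0 < sin \<theta>\<close> by (simp add: pa_def pb_def sine_arc_0)
    have "pa' 1 = - (L * (k * cot \<theta>)) / P" by (simp add: pa'_def cot_def)
    also have "\<dots> = pb' 1" using \<open>k * cot \<theta> = \<sigma>\<close> by (simp add: pb'_def)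
    finally show "pa' 1 = pb' 1" .
    show "0 < pa y" if "0 \<le> y" "y \<le> 1" for y
      unfolding pa_def using that \<open>0 < P\<close> \<open>L * k + \<theta> \<le> pi / 2\<close> \<open>0 < L * k\<close> \<open>0 < \<theta>\<close> pi_gt_zero
      by (intro divide_pos_pos sine_arc_pos) auto
    show "0 < pb y" for y using \<open>0 < P\<close> by (simp add: pb_def)
    show "pa' 0 \<le> L * sqrt (- (- r1) - r1)"
      using \<open>0 < P\<close> \<open>0 \<le> cos (L * k + \<theta>)\<close> \<open>0 < sin \<theta>\<close> \<open>0 < L * k\<close>
      by (simp add: pa'_def)
  qed (use L r in auto)
  moreover have "phi1 r1 r2 r3 L y = (if y < 1 then pa y else pb y)" if "0 \<le> y" for y
  proof -
    have "phi_case2 r3 r2 r1 L 1 = P"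
      by (simp add: phi_case2_def Let_def k_def[symmetric] \<theta>_def[symmetric] P_def sine_arc_def)
    then show ?thesis
      using L(2) r(1) that \<open>0 < P\<close>
      by (auto simp: phi1_def phi_case2_def Let_def k_def[symmetric] \<theta>_def[symmetric] \<sigma>_def[symmetric]
          pa_def pb_def sine_arc_def P_def[symmetric])
  qed
  ultimately show ?thesis unfolding l by blast
qed

lemma phi1_eigenprofile:
  assumes "0 < L" "max r1 r3 < r2"
  shows "\<exists>pa pa' pb pb'. eigenprofile r1 r2 r3 L (lambda1 r1 r2 r3 L) pa pa' pb pb' \<and>
    (\<forall>y\<ge>0. phi1 r1 r2 r3 L y = (if y < 1 then pa y else pb y))"
proof (cases "Lbar r1 r2 r3 < L")
  case True
  then show ?thesis using phi1_eigenprofile_above_Lbar assms by blast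
next
  case False
  then have "r1 \<noteq> r3" using assms(1) by (auto simp: Lbar_def)
  then consider "r1 < r3" | "r3 < r1" by linarith
  then show ?thesis using phi1_eigenprofile_r1_less_r3 phi1_eigenprofile_r3_less_r1 False assms by cases blast+
qed

section \<open>The speed\<close>

lemma lam_c_Ffun:
  assumes "0 < d" "d\<^sup>2 < 4 * r1"
  shows "lam_c r1 (d / 2 + 2 * r1 / d) = d / 2"
proof -
  have "0 \<le> 2 * r1 / d - d / 2"
    using assms by (simp add: field_simps power2_eq_square)
  moreover have "(d / 2 + 2 * r1 / d)\<^sup>2 - 4 * r1 = (2 * r1 / d - d / 2)\<^sup>2"
    using assms(1) by (simp add: power2_eq_square field_simps)
  ultimately show ?thesis by (simp add: lam_c_def)
qed

lemma lam_c_min_speed: "0 \<le> r1 \<Longrightarrow> lam_c r1 (2 * sqrt r1) = sqrt r1"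
  by (simp add: lam_c_def power_mult_distrib)

text \<open>Write \<open>cA = d + a\<close> with \<open>a = 2 sqrt (- l - r1)\<close>. If \<open>d < 2 sqrt r1\<close>, then
  \<open>c = Ffun r1 l cA = d / 2 + 2 r1 / d\<close> has decay rate \<open>d / 2\<close> and both decay inequalities are
  equalities; otherwise \<open>c = 2 sqrt r1\<close> has decay rate \<open>sqrt r1 \<le> d / 2\<close>.\<close>
lemma speed_c_properties:
  fixes r1 l cA c lam :: real
  assumes r1: "0 < r1" and l: "l \<le> - r1" and cA: "2 * sqrt (- l) < cA"
    and c_def: "c = (if cA < 2 * sqrt r1 + 2 * sqrt (- l - r1) then Ffun r1 l cA else 2 * sqrt r1)"
    and lam_def: "lam = lam_c r1 c"
  shows "0 < lam" "c \<le> cA" "r1 \<le> c * lam - lam\<^sup>2" "lam * (cA - c) \<le> cA\<^sup>2 / 4 + l"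
    "lam \<le> cA / 2 - sqrt (- l - r1)"
proof -
  define a d where "a = 2 * sqrt (- l - r1)" and "d = cA - a"
  have "0 \<le> a" "a\<^sup>2 = 4 * (- l - r1)" using l by (simp_all add: a_def power_mult_distrib)
  have "(sqrt r1)\<^sup>2 = r1" using r1 by simp
  have "a \<le> 2 * sqrt (- l)" using r1 by (simp add: a_def)
  then have "0 < d" using cA by (simp add: d_def)
  have "(2 * sqrt (- l))\<^sup>2 < cA\<^sup>2"
    using cA l r1 by (intro power_strict_mono) auto
  moreover have "(2 * sqrt (- l))\<^sup>2 = a\<^sup>2 + 4 * r1"
    using l r1 \<open>a\<^sup>2 = 4 * (- l - r1)\<close> by (simp add: power_mult_distrib)
  ultimately have big: "4 * r1 < d\<^sup>2 + 2 * a * d"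
    by (simp add: d_def power2_eq_square algebra_simps)
  have l_eq: "l = - a\<^sup>2 / 4 - r1" using \<open>a\<^sup>2 = 4 * (- l - r1)\<close> by (simp add: field_simps)
  have cA_eq: "cA = d + a" by (simp add: d_def)
  have "0 < lam \<and> c \<le> cA \<and> r1 \<le> c * lam - lam\<^sup>2 \<and> lam * (cA - c) \<le> cA\<^sup>2 / 4 + l \<and> lam \<le> d / 2"
  proof (cases "d < 2 * sqrt r1")
    case True
    have c: "c = d / 2 + 2 * r1 / d"
      using True c_def by (simp add: Ffun_def a_def[symmetric] d_def)
    have "d\<^sup>2 < (2 * sqrt r1)\<^sup>2" using True \<open>0 < d\<close> by (intro power_strict_mono) auto
    then have lam: "lam = d / 2"
      using lam_c_Ffun[OF \<open>0 < d\<close>] r1 by (simp add: lam_def c power_mult_distrib)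
    have "2 * r1 / d \<le> d / 2 + a" using big \<open>0 < d\<close> by (simp add: field_simps power2_eq_square)
    then have "c \<le> cA" by (simp add: c cA_eq)
    moreover have "c * lam - lam\<^sup>2 = r1" using \<open>0 < d\<close> by (simp add: c lam field_simps power2_eq_square)
    moreover have "lam * (cA - c) = cA\<^sup>2 / 4 + l"
      using \<open>0 < d\<close> by (simp add: c lam l_eq cA_eq field_simps power2_eq_square)
    ultimately show ?thesis using lam \<open>0 < d\<close> by (intro conjI; linarith)
  next
    case False
    have c: "c = 2 * sqrt r1" using False c_def by (simp add: a_def[symmetric] d_def)
    have lam: "lam = sqrt r1" using r1 by (simp add: lam_def c lam_c_min_speed)
    have "cA\<^sup>2 / 4 + l - lam * (cA - c) = (d / 2 - sqrt r1)\<^sup>2 + a * (d / 2 - sqrt r1)"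
      using \<open>(sqrt r1)\<^sup>2 = r1\<close> by (simp add: c lam l_eq cA_eq field_simps power2_eq_square)
    moreover have "0 \<le> a * (d / 2 - sqrt r1)" using False \<open>0 \<le> a\<close> by simp
    moreover have "0 \<le> (d / 2 - sqrt r1)\<^sup>2" by simp
    moreover have "c * lam - lam\<^sup>2 = r1" using \<open>(sqrt r1)\<^sup>2 = r1\<close> by (simp add: c lam power2_eq_square)
    moreover have "c \<le> cA" using False \<open>0 \<le> a\<close> by (simp add: c cA_eq)
    ultimately show ?thesis using False lam r1 by (intro conjI; simp; linarith)
  qed
  moreover have "d / 2 = cA / 2 - sqrt (- l - r1)" by (simp add: d_def a_def)
  ultimately show "0 < lam" "c \<le> cA" "r1 \<le> c * lam - lam\<^sup>2" "lam * (cA - c) \<le> cA\<^sup>2 / 4 + l"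
    "lam \<le> cA / 2 - sqrt (- l - r1)" by auto
qed

theorem lemma3p3:
  fixes r1 r2 r3 L M cA :: real and T :: ereal
    and A :: "real \<Rightarrow> real" and f :: "real \<Rightarrow> real \<Rightarrow> real \<Rightarrow> real"
    and r :: "real \<Rightarrow> real \<Rightarrow> real"
  assumes pos: "r1 > 0" "r2 > 0" "r3 > 0" "L > 0" "M > 0"
    and r2_gt: "r2 > max r1 r3"
    and cA: "cA > 2 * sqrt (- lambda1 r1 r2 r3 L)"
    and T: "0 < T"
    and A_cont: "continuous_on UNIV A" and A_nonneg: "\<And>t. A t \<ge> 0"
    and A_lin: "\<And>t. 0 \<le> t \<Longrightarrow> ereal t < T \<Longrightarrow> A t = cA * t"
    and r_def: "\<And>t x. r t x = (if x < A t then r1 else if x < A t + L then r2 else r3)"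
    and f_bdd: "\<And>u. \<exists>B. \<forall>t x. \<bar>f t x u\<bar> \<le> B"
    and f_C2: "\<And>t x. \<exists>f' f''. (\<forall>u. (f t x has_real_derivative f' u) (at u)
                               \<and> (f' has_real_derivative f'' u) (at u))
                            \<and> continuous_on UNIV f''"
    and f_zero: "\<And>t x. f t x 0 = 0"
    and f_deriv0: "\<And>t x. deriv (f t x) 0 = r t x"
    and f_upper: "\<And>t x u. u \<ge> 0 \<Longrightarrow> f t x u \<le> r t x * u"
    and f_lower: "\<And>t x u. u \<ge> 0 \<Longrightarrow> f t x u \<ge> r t x * u - M * u\<^sup>2"
    and f_neg: "\<And>t x u. u > 1 \<Longrightarrow> f t x u < 0"
  shows "\<forall>C \<ge> 1. gen_supersolution (\<lambda>t x. C * ubar r1 r2 r3 L cA t x) f T"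
proof (intro allI impI)
  fix C :: real
  assume C: "1 \<le> C"
  define l c lam where "l = lambda1 r1 r2 r3 L" and "c = speed_c r1 r2 r3 L cA" and "lam = lam_c r1 c"
  obtain pa pa' pb pb' where eigen: "eigenprofile r1 r2 r3 L l pa pa' pb pb'"
    and phi1: "\<And>y. 0 \<le> y \<Longrightarrow> phi1 r1 r2 r3 L y = (if y < 1 then pa y else pb y)"
    using phi1_eigenprofile[OF pos(4) r2_gt] unfolding l_def by blast
  have "c = (if cA < 2 * sqrt r1 + 2 * sqrt (- l - r1) then Ffun r1 l cA else 2 * sqrt r1)"
    by (simp add: c_def l_def speed_c_def Let_def)
  note speed = speed_c_properties[OF pos(1) eigenprofile.l_le[OF eigen] cA[folded l_def] this lam_def]
  interpret ubar_parameters r1 r2 r3 L l pa pa' pb pb' cA c lam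
    using eigen speed by (intro ubar_parameters.intro ubar_parameters_axioms.intro)
  have "C * ubar r1 r2 r3 L cA t x = supersol C t x" for t x
    using phi1[of "(x - cA * t) / L"] pos(4)
    by (simp add: ubar_def supersol_def Let_def c_def[symmetric] lam_def[symmetric] front_def Phi_def)
  moreover have "f t x w \<le> (if x < cA * t then r1 else if x < cA * t + L then r2 else r3) * w"
    if "t \<in> time_dom T" "0 \<le> w" for t x w
  proof -
    have A_t: "A t = cA * t" using that A_lin by (simp add: time_dom_def)
    show ?thesis using f_upper[OF that(2), of t x] unfolding r_def A_t .
  qed
  ultimately show "gen_supersolution (\<lambda>t x. C * ubar r1 r2 r3 L cA t x) f T"
    using gen_supersolution_supersol[OF C _ f_neg] by simp
qed

end
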